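(* Let $\mathfrak g$ be a Lie algebra with a non-degenerate invariant symmetric bilinear form $B$ and derived potential $\mu\in S^3\mathfrak g$, let $\mathfrak h$ be a Lie algebra whose bracket is $\nu\in\bigwedge^2\mathfrak h^*\otimes\mathfrak h$, viewed as an element of $S^*(\mathfrak h^*\oplus\mathfrak h)$, and let $\psi\in\mathfrak h^*\otimes\bigwedge^2\mathfrak g$ with associated linear map $\theta_\psi:\mathfrak h\to\bigwedge^2\mathfrak g\simeq\mathfrak{so}(\mathfrak g)$, $\theta_\psi(x)=[x,\psi]$. Let $\mathfrak d=\mathfrak h^*\oplus\mathfrak h\oplus\mathfrak g$. (1) If $\theta_\psi$ is a homomorphism of Lie algebras $\mathfrak h\to\mathrm{Der}(\mathfrak g)$ whose image preserves $B$ and $\mathfrak d$ is the Medina–Revoy double extension of $\mathfrak g$ by $\mathfrak h$ via $\theta_\psi$, then the derived potential of the Lie algebra $\mathfrak d$ is $\mu+\nu+\psi$ and $[\mu+\nu+\psi,\mu+\nu+\psi]=0$. (2) Conversely, if $[\mu+\nu+\psi,\mu+\nu+\psi]=0$, then $\theta_\psi$ is a Lie algebra homomorphism $\mathfrak h\to\mathrm{Der}(\mathfrak g)$ with image preserving $B$, and the Lie algebra $\mathfrak h^*\oplus\mathfrak h\oplus\mathfrak g$ with derived potential $\mu+\nu+\psi$ is the Medina–Revoy double extension of $\mathfrak g$ by $\mathfrak h$ via $\theta_\psi$.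
   Context: All Lie algebras are finite-dimensional over $\mathbb K=\mathbb R$ or $\mathbb C$. A vector space $V$ with a non-degenerate symmetric form is regarded as a purely odd superspace with an (even, super-skew-symmetric) non-degenerate form; then the super-symmetric algebra $S^*V$ is the exterior algebra of $V$ (so $S^2V=\bigwedge^2V$, $S^3V=\bigwedge^3V$), and it carries the Poisson bracket $[\,,]$ determined by $[x,y]=(x,y)$ for $x,y\in V$, $[v,w_1w_2]=[v,w_1]w_2+(-1)^{\bar v\bar w_1}w_1[v,w_2]$, $[v,w]=-(-1)^{\bar v\bar w}[w,v]$. A Lie bracket on $V$ invariant with respect to the form is of the form $\{a,b\}=[a,[b,\mu]]$ for a unique $\mu\in S^3V$, called its derived potential. On $\mathfrak d=\mathfrak h^*\oplus\mathfrak h\oplus\mathfrak g$ one uses the form given by $B$ on $\mathfrak g$ plus the natural symmetric form on $\mathfrak h^*\oplus\mathfrak h$ ($\mathfrak h,\mathfrak h^*$ isotropic, pairing $\alpha(x)$), with $\mathfrak g\perp\mathfrak h^*\oplus\mathfrak h$; $\nu\in\bigwedge^2\mathfrak h^*\otimes\mathfrak h$ and $\psi\in\mathfrak h^*\otimes\bigwedge^2\mathfrak g$ are regarded as elements of $S^3(\mathfrak d)$. The identification $\bigwedge^2\mathfrak g\simeq\mathfrak{so}(\mathfrak g)$ is via the Poisson bracket action on $\mathfrak g$. Medina–Revoy double extension: given $\theta:\mathfrak h\to\mathrm{Der}(\mathfrak g)$ a Lie algebra homomorphism with $\theta(\mathfrak h)$ preserving $B$, the space $\mathfrak h^*\oplus\mathfrak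 g\oplus\mathfrak h$ with bracket $[(f_1,w_1,s_1),(f_2,w_2,s_2)]=(\mathrm{ad}^*(s_2)f_1-\mathrm{ad}^*(s_1)f_2+\omega(w_1,w_2),\,[w_1,w_2]+\theta(s_1)w_2-\theta(s_2)w_1,\,[s_1,s_2])$, where $\omega(w_1,w_2)(s)=B(\theta(s)w_1,w_2)$, is a Lie algebra, invariant with respect to the form above; it is called the double extension of $\mathfrak g$ by $\mathfrak h$ via $\theta$. *)

theory Defs
  imports Main "HOL-Library.Countable" "HOL-Library.Function_Algebras"
begin

text \<open>A finite-dimensional vector space with basis indexed by a finite type 'n is
  modelled as the coordinate space 'n \<Rightarrow> 'k (pointwise addition from Function_Algebras).\<close>

definition smul :: "'k::times \<Rightarrow> ('n \<Rightarrow> 'k) \<Rightarrow> ('n \<Rightarrow> 'k)" where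
  "smul c x = (\<lambda>i. c * x i)"

definition basis_vec :: "'n \<Rightarrow> 'n \<Rightarrow> 'k::{zero,one}" where
  "basis_vec a = (\<lambda>a'. if a' = a then 1 else 0)"

definition lin_map :: "(('n \<Rightarrow> 'k::field) \<Rightarrow> ('m \<Rightarrow> 'k)) \<Rightarrow> bool" where
  "lin_map D \<longleftrightarrow> (\<forall>x y. D (x + y) = D x + D y) \<and> (\<forall>c x. D (smul c x) = smul c (D x))"

definition lie_bracket :: "(('n \<Rightarrow> 'k::field) \<Rightarrow> ('n \<Rightarrow> 'k) \<Rightarrow> ('n \<Rightarrow> 'k)) \<Rightarrow> bool" where
  "lie_bracket L \<longleftrightarrow>
     (\<forall>y. lin_map (\<lambda>x. L x y)) \<and> (\<forall>x. lin_map (\<lambda>y. L x y)) \<and>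
     (\<forall>x. L x x = 0) \<and>
     (\<forall>x y z. L x (L y z) + L y (L z x) + L z (L x y) = 0)"

definition bform :: "('n::finite \<Rightarrow> 'n \<Rightarrow> 'k::field) \<Rightarrow> ('n \<Rightarrow> 'k) \<Rightarrow> ('n \<Rightarrow> 'k) \<Rightarrow> 'k" where
  "bform Bm x y = (\<Sum>i\<in>UNIV. \<Sum>j\<in>UNIV. x i * Bm i j * y j)"

definition symmetric_form :: "('n \<Rightarrow> 'n \<Rightarrow> 'k) \<Rightarrow> bool" where
  "symmetric_form Bm \<longleftrightarrow> (\<forall>i j. Bm i j = Bm j i)"

definition nondegenerate_form :: "('n::finite \<Rightarrow> 'n \<Rightarrow> 'k::field) \<Rightarrow> bool" where
  "nondegenerate_form Bm \<longleftrightarrow> (\<forall>x. (\<forall>y. bform Bm x y = 0) \<longrightarrow> x = 0)"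

definition invariant_form :: "('n::finite \<Rightarrow> 'n \<Rightarrow> 'k::field) \<Rightarrow> (('n \<Rightarrow> 'k) \<Rightarrow> ('n \<Rightarrow> 'k) \<Rightarrow> ('n \<Rightarrow> 'k)) \<Rightarrow> bool" where
  "invariant_form Bm L \<longleftrightarrow> (\<forall>x y z. bform Bm (L x y) z = bform Bm x (L y z))"

definition is_derivation :: "(('n \<Rightarrow> 'k::field) \<Rightarrow> ('n \<Rightarrow> 'k) \<Rightarrow> ('n \<Rightarrow> 'k)) \<Rightarrow> (('n \<Rightarrow> 'k) \<Rightarrow> ('n \<Rightarrow> 'k)) \<Rightarrow> bool" where
  "is_derivation L D \<longleftrightarrow> lin_map D \<and> (\<forall>x y. D (L x y) = L (D x) y + L x (D y))"

definition preserves_form :: "('n::finite \<Rightarrow> 'n \<Rightarrow> 'k::field) \<Rightarrow> (('n \<Rightarrow> 'k) \<Rightarrow> ('n \<Rightarrow> 'k)) \<Rightarrow> bool" where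
  "preserves_form Bm D \<longleftrightarrow> (\<forall>x y. bform Bm (D x) y + bform Bm x (D y) = 0)"

definition lie_hom_to_der ::
  "(('a \<Rightarrow> 'k::field) \<Rightarrow> ('a \<Rightarrow> 'k) \<Rightarrow> ('a \<Rightarrow> 'k)) \<Rightarrow> (('b \<Rightarrow> 'k) \<Rightarrow> ('b \<Rightarrow> 'k) \<Rightarrow> ('b \<Rightarrow> 'k))
    \<Rightarrow> (('a \<Rightarrow> 'k) \<Rightarrow> ('b \<Rightarrow> 'k) \<Rightarrow> ('b \<Rightarrow> 'k)) \<Rightarrow> bool" where
  "lie_hom_to_der Lh Lg theta \<longleftrightarrow>
     (\<forall>w. lin_map (\<lambda>s. theta s w)) \<and>
     (\<forall>s. is_derivation Lg (theta s)) \<and>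
     (\<forall>s t. theta (Lh s t) = (\<lambda>w. theta s (theta t w) - theta t (theta s w)))"

section \<open>The super-symmetric algebra of a purely odd space = exterior algebra\<close>

text \<open>For a finite basis index type 'i, an element of the exterior algebra is given by its
  coefficients: alpha S is the coefficient of e_S = e_{s_1} \<and> ... \<and> e_{s_k}, where
  s_1 < ... < s_k in the fixed linear order induced by the injection to_nat.\<close>

type_synonym ('i, 'k) ext = "'i set \<Rightarrow> 'k"

definition ord_lt :: "'i::countable \<Rightarrow> 'i \<Rightarrow> bool" where
  "ord_lt i j \<longleftrightarrow> to_nat i < to_nat j"

definition shuffle_sign :: "'i::countable set \<Rightarrow> 'i set \<Rightarrow> 'k::ring_1" where
  "shuffle_sign S T = (-1) ^ card {(s, t). s \<in> S \<and> t \<in> T \<and> ord_lt t s}"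

definition wedge :: "('i::{finite,countable}, 'k::ring_1) ext \<Rightarrow> ('i, 'k) ext \<Rightarrow> ('i, 'k) ext" where
  "wedge \<alpha> \<beta> = (\<lambda>U. \<Sum>S\<in>Pow U. shuffle_sign S (U - S) * \<alpha> S * \<beta> (U - S))"

definition ext_scale :: "'k::times \<Rightarrow> ('i, 'k) ext \<Rightarrow> ('i, 'k) ext" where
  "ext_scale c \<alpha> = (\<lambda>S. c * \<alpha> S)"

text \<open>Left and right odd partial derivatives: left_der i (e_i \<and> e_T) = e_T and
  right_der i (e_T \<and> e_i) = e_T.\<close>
definition left_der :: "'i::countable \<Rightarrow> ('i, 'k::ring_1) ext \<Rightarrow> ('i, 'k) ext" where
  "left_der i \<alpha> = (\<lambda>T. if i \<in> T then 0
       else (-1) ^ card {t \<in> T. ord_lt t i} * \<alpha> (insert i T))"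

definition right_der :: "'i::countable \<Rightarrow> ('i, 'k::ring_1) ext \<Rightarrow> ('i, 'k) ext" where
  "right_der i \<alpha> = (\<lambda>T. if i \<in> T then 0
       else (-1) ^ card {t \<in> T. ord_lt i t} * \<alpha> (insert i T))"

text \<open>The Poisson bracket determined by [x,y] = (x,y) (Gram matrix G) and the super Leibniz
  rule: [alpha, beta] = sum_{i,j} G i j (alpha right_der i) \<and> (left_der j beta).\<close>
definition poisson :: "('i::{finite,countable} \<Rightarrow> 'i \<Rightarrow> 'k::ring_1) \<Rightarrow> ('i, 'k) ext \<Rightarrow> ('i, 'k) ext \<Rightarrow> ('i, 'k) ext" where
  "poisson G \<alpha> \<beta> = (\<Sum>i\<in>UNIV. \<Sum>j\<in>UNIV. ext_scale (G i j) (wedge (right_der i \<alpha>) (left_der j \<beta>)))"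

definition vext :: "('i \<Rightarrow> 'k::zero) \<Rightarrow> ('i, 'k) ext" where
  "vext v = (\<lambda>S. if card S = 1 then v (the_elem S) else 0)"

definition homogeneous :: "nat \<Rightarrow> ('i, 'k::zero) ext \<Rightarrow> bool" where
  "homogeneous k \<alpha> \<longleftrightarrow> (\<forall>S. \<alpha> S \<noteq> 0 \<longrightarrow> card S = k)"

definition derived_potential :: "('i::{finite,countable} \<Rightarrow> 'i \<Rightarrow> 'k::ring_1)
    \<Rightarrow> (('i \<Rightarrow> 'k) \<Rightarrow> ('i \<Rightarrow> 'k) \<Rightarrow> ('i \<Rightarrow> 'k)) \<Rightarrow> ('i, 'k) ext \<Rightarrow> bool" where
  "derived_potential G L \<mu> \<longleftrightarrow> homogeneous 3 \<mu> \<and>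
     (\<forall>a b. vext (L a b) = poisson G (vext a) (poisson G (vext b) \<mu>))"

text \<open>Basis of d indexed by ('a + 'a) + 'b: Inl (Inl a) is the dual basis vector e^a of h*,
  Inl (Inr a) is the basis vector e_a of h, Inr b is the basis vector f_b of g.\<close>

definition gram_d :: "('b \<Rightarrow> 'b \<Rightarrow> 'k::{zero,one}) \<Rightarrow> ('a + 'a) + 'b \<Rightarrow> ('a + 'a) + 'b \<Rightarrow> 'k" where
  "gram_d Bm i j = (case (i, j) of
       (Inl (Inl a), Inl (Inr a')) \<Rightarrow> (if a = a' then 1 else 0)
     | (Inl (Inr a), Inl (Inl a')) \<Rightarrow> (if a = a' then 1 else 0)
     | (Inr b, Inr b') \<Rightarrow> Bm b b'
     | _ \<Rightarrow> 0)"

definition dcoord :: "('a \<Rightarrow> 'k) \<Rightarrow> ('a \<Rightarrow> 'k) \<Rightarrow> ('b \<Rightarrow> 'k) \<Rightarrow> ('a + 'a) + 'b \<Rightarrow> 'k" where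
  "dcoord f s w = case_sum (case_sum f s) w"

abbreviation hvec :: "('a \<Rightarrow> 'k::zero) \<Rightarrow> (('a + 'a) + 'b, 'k) ext" where
  "hvec s \<equiv> vext (dcoord 0 s 0)"

abbreviation gvec :: "('b \<Rightarrow> 'k::zero) \<Rightarrow> (('a + 'a) + 'b, 'k) ext" where
  "gvec w \<equiv> vext (dcoord 0 0 w)"

definition gpart :: "(('a + 'a) + 'b, 'k) ext \<Rightarrow> 'b \<Rightarrow> 'k" where
  "gpart \<alpha> = (\<lambda>b. \<alpha> {Inr b})"

text \<open>Elements of S^3 g, of (wedge^2 h*) (x) h, and of h* (x) wedge^2 g inside S^3 d.\<close>
definition in_S3_g :: "(('a + 'a) + 'b, 'k::zero) ext \<Rightarrow> bool" where
  "in_S3_g \<alpha> \<longleftrightarrow> (\<forall>S. \<alpha> S \<noteq> 0 \<longrightarrow> (\<exists>b1 b2 b3. distinct [b1, b2, b3] \<and> S = {Inr b1, Inr b2, Inr b3}))"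

definition in_L2hs_h :: "(('a + 'a) + 'b, 'k::zero) ext \<Rightarrow> bool" where
  "in_L2hs_h \<alpha> \<longleftrightarrow> (\<forall>S. \<alpha> S \<noteq> 0 \<longrightarrow> (\<exists>a1 a2 a3. a1 \<noteq> a2 \<and> S = {Inl (Inl a1), Inl (Inl a2), Inl (Inr a3)}))"

definition in_hs_L2g :: "(('a + 'a) + 'b, 'k::zero) ext \<Rightarrow> bool" where
  "in_hs_L2g \<alpha> \<longleftrightarrow> (\<forall>S. \<alpha> S \<noteq> 0 \<longrightarrow> (\<exists>a b1 b2. b1 \<noteq> b2 \<and> S = {Inl (Inl a), Inr b1, Inr b2}))"

text \<open>theta_psi(x) = [x, psi] in wedge^2 g, acting on g by the Poisson bracket:
  theta_psi(x) w = [[x, psi], w].\<close>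
definition theta_psi :: "('b::finite \<Rightarrow> 'b \<Rightarrow> 'k::ring_1) \<Rightarrow> ((('a::finite) + 'a) + 'b, 'k) ext
    \<Rightarrow> ('a \<Rightarrow> 'k) \<Rightarrow> ('b \<Rightarrow> 'k) \<Rightarrow> ('b \<Rightarrow> 'k)" where
  "theta_psi Bm \<psi> x w = gpart (poisson (gram_d Bm) (poisson (gram_d Bm) (hvec x) \<psi>) (gvec w))"

text \<open>Elements of h* + g + h are triples (f, w, s); h* carries coordinates w.r.t. the dual basis,
  so f(x) = sum_a f a * x a.  (ad^*(s) f)(t) = f([s,t]) and omega(w1,w2)(s) = B(theta(s) w1, w2).\<close>

definition dpair :: "('a::finite \<Rightarrow> 'k::comm_ring_1) \<Rightarrow> ('a \<Rightarrow> 'k) \<Rightarrow> 'k" where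
  "dpair f x = (\<Sum>a\<in>UNIV. f a * x a)"

definition coad :: "(('a::finite \<Rightarrow> 'k::comm_ring_1) \<Rightarrow> ('a \<Rightarrow> 'k) \<Rightarrow> ('a \<Rightarrow> 'k)) \<Rightarrow> ('a \<Rightarrow> 'k) \<Rightarrow> ('a \<Rightarrow> 'k) \<Rightarrow> ('a \<Rightarrow> 'k)" where
  "coad Lh s f = (\<lambda>a. dpair f (Lh s (basis_vec a)))"

definition mr_omega :: "('b::finite \<Rightarrow> 'b \<Rightarrow> 'k::field) \<Rightarrow> (('a \<Rightarrow> 'k) \<Rightarrow> ('b \<Rightarrow> 'k) \<Rightarrow> ('b \<Rightarrow> 'k))
    \<Rightarrow> ('b \<Rightarrow> 'k) \<Rightarrow> ('b \<Rightarrow> 'k) \<Rightarrow> ('a \<Rightarrow> 'k)" where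
  "mr_omega Bm theta w1 w2 = (\<lambda>a. bform Bm (theta (basis_vec a) w1) w2)"

definition mr_bracket ::
  "('b::finite \<Rightarrow> 'b \<Rightarrow> 'k::field) \<Rightarrow> (('b \<Rightarrow> 'k) \<Rightarrow> ('b \<Rightarrow> 'k) \<Rightarrow> ('b \<Rightarrow> 'k))
   \<Rightarrow> (('a::finite \<Rightarrow> 'k) \<Rightarrow> ('a \<Rightarrow> 'k) \<Rightarrow> ('a \<Rightarrow> 'k)) \<Rightarrow> (('a \<Rightarrow> 'k) \<Rightarrow> ('b \<Rightarrow> 'k) \<Rightarrow> ('b \<Rightarrow> 'k))
   \<Rightarrow> ('a \<Rightarrow> 'k) \<times> ('b \<Rightarrow> 'k) \<times> ('a \<Rightarrow> 'k) \<Rightarrow> ('a \<Rightarrow> 'k) \<times> ('b \<Rightarrow> 'k) \<times> ('a \<Rightarrow> 'k)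
   \<Rightarrow> ('a \<Rightarrow> 'k) \<times> ('b \<Rightarrow> 'k) \<times> ('a \<Rightarrow> 'k)" where
  "mr_bracket Bm Lg Lh theta u v = (case (u, v) of ((f1, w1, s1), (f2, w2, s2)) \<Rightarrow>
     (coad Lh s2 f1 - coad Lh s1 f2 + mr_omega Bm theta w1 w2,
      Lg w1 w2 + theta s1 w2 - theta s2 w1,
      Lh s1 s2))"

definition to_triple :: "(('a + 'a) + 'b \<Rightarrow> 'k) \<Rightarrow> ('a \<Rightarrow> 'k) \<times> ('b \<Rightarrow> 'k) \<times> ('a \<Rightarrow> 'k)" where
  "to_triple x = (\<lambda>a. x (Inl (Inl a)), \<lambda>b. x (Inr b), \<lambda>a. x (Inl (Inr a)))"

definition of_triple :: "('a \<Rightarrow> 'k) \<times> ('b \<Rightarrow> 'k) \<times> ('a \<Rightarrow> 'k) \<Rightarrow> ('a + 'a) + 'b \<Rightarrow> 'k" where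
  "of_triple t = (case t of (f, w, s) \<Rightarrow> dcoord f s w)"

definition double_extension ::
  "('b::finite \<Rightarrow> 'b \<Rightarrow> 'k::field) \<Rightarrow> (('b \<Rightarrow> 'k) \<Rightarrow> ('b \<Rightarrow> 'k) \<Rightarrow> ('b \<Rightarrow> 'k))
   \<Rightarrow> (('a::finite \<Rightarrow> 'k) \<Rightarrow> ('a \<Rightarrow> 'k) \<Rightarrow> ('a \<Rightarrow> 'k)) \<Rightarrow> (('a \<Rightarrow> 'k) \<Rightarrow> ('b \<Rightarrow> 'k) \<Rightarrow> ('b \<Rightarrow> 'k))
   \<Rightarrow> (('a + 'a) + 'b \<Rightarrow> 'k) \<Rightarrow> (('a + 'a) + 'b \<Rightarrow> 'k) \<Rightarrow> (('a + 'a) + 'b \<Rightarrow> 'k)" where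
  "double_extension Bm Lg Lh theta x y =
     of_triple (mr_bracket Bm Lg Lh theta (to_triple x) (to_triple y))"

end

theory Submission
  imports Defs "HOL-Analysis.Cartesian_Space"
begin

text \<open>A cubic element P of the exterior algebra defines the bracket [x, y] = [x, [y, P]]; in
  coordinates its structure constants are the third derivatives of P. Expanding the fourth
  derivatives of [P, P] by the Leibniz rule shows that they are twice the coefficients of the
  Jacobiator of this bracket. For a nondegenerate form these coefficients determine the
  Jacobiator, so [P, P] = 0 exactly when the bracket of P is a Lie bracket.

  For P = \<mu> + \<nu> + \<psi> a comparison of coefficients, sorted by the summands h*, h, g
  containing the indices, shows that the bracket of P is the Medina--Revoy bracket built from
  theta_psi, and that theta_psi(x) is skew for B. The g-component of its
  Jacobiator vanishes iff theta_psi is a homomorphism into Der(g), the h-component is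
  the Jacobiator of h, and the remaining coefficients follow from these by total antisymmetry.\<close>

section \<open>Signs and odd derivations of the exterior algebra\<close>

lemma ord_lt_total: "i \<noteq> j \<Longrightarrow> ord_lt i j \<or> ord_lt j i"
  unfolding ord_lt_def by (metis linorder_neqE_nat to_nat_split)

lemma ord_lt_asym: "ord_lt i j \<Longrightarrow> \<not> ord_lt j i"
  unfolding ord_lt_def by simp

definition left_sign :: "'i::countable \<Rightarrow> 'i set \<Rightarrow> 'k::ring_1" where
  "left_sign i T = (-1) ^ card {t \<in> T. ord_lt t i}"

definition right_sign :: "'i::countable \<Rightarrow> 'i set \<Rightarrow> 'k::ring_1" where
  "right_sign i T = (-1) ^ card {t \<in> T. ord_lt i t}"

lemma left_der_eq:
  "left_der i \<alpha> T = (if i \<in> T then 0 else left_sign i T * \<alpha> (insert i T))"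
  by (simp add: left_der_def left_sign_def)

lemma right_der_eq:
  "right_der i \<alpha> T = (if i \<in> T then 0 else right_sign i T * \<alpha> (insert i T))"
  by (simp add: right_der_def right_sign_def)

lemma left_der_empty: "left_der i \<alpha> {} = \<alpha> {i}"
  by (simp add: left_der_eq left_sign_def)

lemma left_sign_empty [simp]: "left_sign i {} = 1"
  by (simp add: left_sign_def)

lemma right_sign_empty [simp]: "right_sign i {} = 1"
  by (simp add: right_sign_def)

lemma left_sign_square [simp]: "left_sign i T * left_sign i T = (1::'k::ring_1)"
  by (simp add: left_sign_def power_mult_distrib[symmetric] flip: power_add)

lemma left_sign_square_mult [simp]: "left_sign i T * (left_sign i T * x) = (x::'k::ring_1)"
  by (simp add: mult.assoc[symmetric])

lemma card_filter_insert:
  assumes "i \<notin> T" "finite T"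
  shows "card {t \<in> insert i T. P t} = card {t \<in> T. P t} + (if P i then 1 else 0)"
proof -
  have "{t \<in> insert i T. P t} = (if P i then insert i {t \<in> T. P t} else {t \<in> T. P t})"
    by auto
  then show ?thesis using assms by simp
qed

lemma left_sign_insert:
  fixes T :: "'i::{finite,countable} set"
  assumes "j \<notin> T"
  shows "(left_sign i (insert j T) :: 'k::ring_1) = (if ord_lt j i then -1 else 1) * left_sign i T"
  unfolding left_sign_def card_filter_insert[OF assms finite] by (simp add: power_add)

lemma left_sign_union:
  fixes S R :: "'i::{finite,countable} set"
  assumes "S \<inter> R = {}"
  shows "(left_sign i (S \<union> R) :: 'k::ring_1) = left_sign i S * left_sign i R"
proof -
  have "{t \<in> S \<union> R. ord_lt t i} = {t \<in> S. ord_lt t i} \<union> {t \<in> R. ord_lt t i}"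
    by auto
  moreover have "{t \<in> S. ord_lt t i} \<inter> {t \<in> R. ord_lt t i} = {}"
    using assms by auto
  ultimately show ?thesis
    unfolding left_sign_def by (simp add: card_Un_disjoint power_add)
qed

lemma left_sign_times_right_sign:
  fixes S :: "'i::{finite,countable} set"
  assumes "i \<notin> S"
  shows "(left_sign i S * right_sign i S :: 'k::ring_1) = (-1) ^ card S"
proof -
  have split: "{t \<in> S. ord_lt t i} \<union> {t \<in> S. ord_lt i t} = S"
  proof (intro equalityI subsetI)
    fix t assume "t \<in> S"
    with assms ord_lt_total[of t i] show "t \<in> {t \<in> S. ord_lt t i} \<union> {t \<in> S. ord_lt i t}"
      by auto
  qed auto
  have "{t \<in> S. ord_lt t i} \<inter> {t \<in> S. ord_lt i t} = {}"
    using ord_lt_asym by auto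
  from card_Un_disjoint[OF finite finite this]
  have "card S = card {t \<in> S. ord_lt t i} + card {t \<in> S. ord_lt i t}"
    by (simp only: split)
  then show ?thesis
    unfolding left_sign_def right_sign_def by (simp only: power_add)
qed

lemma shuffle_sign_insert_right:
  fixes S R :: "'i::{finite,countable} set"
  assumes "i \<notin> R"
  shows "(shuffle_sign S (insert i R) :: 'k::ring_1) = shuffle_sign S R * right_sign i S"
proof -
  let ?A = "{(s, t). s \<in> S \<and> t \<in> R \<and> ord_lt t s}" and ?B = "(\<lambda>s. (s, i)) ` {s \<in> S. ord_lt i s}"
  have split: "{(s, t). s \<in> S \<and> t \<in> insert i R \<and> ord_lt t s} = ?A \<union> ?B"
    by auto
  have disj: "?A \<inter> ?B = {}"
    using assms by auto
  have card_B: "card ?B = card {s \<in> S. ord_lt i s}"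
    by (rule card_image) (auto simp: inj_on_def)
  have "card {(s, t). s \<in> S \<and> t \<in> insert i R \<and> ord_lt t s}
      = card ?A + card {s \<in> S. ord_lt i s}"
    unfolding split card_Un_disjoint[OF finite finite disj] card_B ..
  then show ?thesis
    unfolding shuffle_sign_def right_sign_def by (simp only: power_add)
qed

lemma shuffle_sign_insert_left:
  fixes S R :: "'i::{finite,countable} set"
  assumes "i \<notin> S"
  shows "(shuffle_sign (insert i S) R :: 'k::ring_1) = shuffle_sign S R * left_sign i R"
proof -
  let ?A = "{(s, t). s \<in> S \<and> t \<in> R \<and> ord_lt t s}" and ?B = "(\<lambda>t. (i, t)) ` {t \<in> R. ord_lt t i}"
  have split: "{(s, t). s \<in> insert i S \<and> t \<in> R \<and> ord_lt t s} = ?A \<union> ?B"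
    by auto
  have disj: "?A \<inter> ?B = {}"
    using assms by auto
  have card_B: "card ?B = card {t \<in> R. ord_lt t i}"
    by (rule card_image) (auto simp: inj_on_def)
  have "card {(s, t). s \<in> insert i S \<and> t \<in> R \<and> ord_lt t s}
      = card ?A + card {t \<in> R. ord_lt t i}"
    unfolding split card_Un_disjoint[OF finite finite disj] card_B ..
  then show ?thesis
    unfolding shuffle_sign_def left_sign_def by (simp only: power_add)
qed

lemma ext_scale_apply [simp]: "ext_scale c \<alpha> S = c * \<alpha> S"
  by (simp add: ext_scale_def)

lemma ext_scale_one [simp]: "ext_scale 1 \<alpha> = (\<alpha>::('i, 'k::comm_ring_1) ext)"
  by (rule ext) simp

lemma ext_scale_minus_one [simp]: "ext_scale (-1) \<alpha> = - (\<alpha>::('i, 'k::comm_ring_1) ext)"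
  by (rule ext) simp

lemma sum_fun_apply: "(\<Sum>j\<in>A. f j) x = (\<Sum>j\<in>A. f j x)"
  by (induction A rule: infinite_finite_induct) simp_all

context
  fixes \<alpha> \<beta> :: "('i::{finite,countable}, 'k::comm_ring_1) ext"
begin

lemma left_der_add: "left_der i (\<alpha> + \<beta>) = left_der i \<alpha> + left_der i \<beta>"
  by (rule ext) (simp add: left_der_def algebra_simps)

lemma left_der_diff: "left_der i (\<alpha> - \<beta>) = left_der i \<alpha> - left_der i \<beta>"
  by (rule ext) (simp add: left_der_def algebra_simps)

lemma left_der_uminus: "left_der i (- \<alpha>) = - left_der i \<alpha>"
  by (rule ext) (simp add: left_der_def)

lemma left_der_scale: "left_der i (ext_scale c \<alpha>) = ext_scale c (left_der i \<alpha>)"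
  by (rule ext) (simp add: left_der_def algebra_simps)

lemma wedge_scale_left: "wedge (ext_scale c \<alpha>) \<beta> = ext_scale c (wedge \<alpha> \<beta>)"
  by (rule ext) (simp add: wedge_def sum_distrib_left algebra_simps)

lemma wedge_zero_left [simp]: "wedge 0 \<beta> = 0"
  by (rule ext) (simp add: wedge_def)

lemma wedge_zero_right [simp]: "wedge \<alpha> 0 = 0"
  by (rule ext) (simp add: wedge_def)

lemma wedge_empty: "wedge \<alpha> \<beta> {} = \<alpha> {} * \<beta> {}"
  by (simp add: wedge_def shuffle_sign_def)

end

lemma left_der_insert_self [simp]: "left_der i \<alpha> (insert i T) = 0"
  by (simp add: left_der_def)

lemma left_der_zero [simp]: "left_der i 0 = 0"
  by (rule ext) (simp add: left_der_def)

lemma left_der_sum: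
  "left_der i (\<Sum>j\<in>A. f j :: ('i::{finite,countable}, 'k::comm_ring_1) ext) = (\<Sum>j\<in>A. left_der i (f j))"
proof (induction A rule: infinite_finite_induct)
  case (insert x F)
  then show ?case by (simp only: sum.insert[OF insert.hyps] left_der_add insert.IH)
next
  case (infinite A)
  then show ?case by (simp only: sum.infinite[OF infinite] left_der_zero)
qed (simp only: sum.empty left_der_zero)

lemma left_der_anticomm:
  fixes \<alpha> :: "('i::{finite,countable}, 'k::comm_ring_1) ext"
  shows "left_der i (left_der j \<alpha>) = - left_der j (left_der i \<alpha>)"
proof (rule ext)
  fix T
  show "left_der i (left_der j \<alpha>) T = (- left_der j (left_der i \<alpha>)) T"
  proof (cases "i = j \<or> i \<in> T \<or> j \<in> T")
    case True
    then show ?thesis by (auto simp: left_der_def)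
  next
    case False
    then have "i \<noteq> j" "i \<notin> T" "j \<notin> T" by auto
    moreover have "insert i (insert j T) = insert j (insert i T)" by auto
    ultimately show ?thesis
      using ord_lt_total[of i j] ord_lt_asym[of i j] ord_lt_asym[of j i]
      by (auto simp: left_der_eq left_sign_insert)
  qed
qed

definition grade_inv :: "('i, 'k::ring_1) ext \<Rightarrow> ('i, 'k) ext" where
  "grade_inv \<alpha> = (\<lambda>S. (-1) ^ card S * \<alpha> S)"

lemma sum_Pow_insert:
  fixes T :: "'i::finite set"
  assumes "i \<notin> T"
  shows "(\<Sum>U\<in>Pow (insert i T). f U) = (\<Sum>S\<in>Pow T. f S) + (\<Sum>S\<in>Pow T. f (insert i S))"
proof -
  have "inj_on (insert i) (Pow T)"
    using assms by (intro inj_onI) (metis Pow_iff insert_ident subset_iff)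
  moreover have "Pow T \<inter> insert i ` Pow T = {}"
    using assms by auto
  ultimately show ?thesis
    by (simp add: Pow_insert sum.union_disjoint sum.reindex)
qed

context
  fixes \<alpha> \<beta> :: "('i::{finite,countable}, 'k::comm_ring_1) ext"
begin

lemma left_der_wedge_notin:
  assumes iT: "i \<notin> T"
  shows "left_der i (wedge \<alpha> \<beta>) T = wedge (left_der i \<alpha>) \<beta> T + wedge (grade_inv \<alpha>) (left_der i \<beta>) T"
proof -
  have A: "left_sign i T * (shuffle_sign S (insert i T - S) * \<alpha> S * \<beta> (insert i T - S))
      = shuffle_sign S (T - S) * grade_inv \<alpha> S * left_der i \<beta> (T - S)" if "S \<in> Pow T" for S
  proof -
    have iS: "i \<notin> S" "i \<notin> T - S" using that iT by auto
    have "left_sign i T = (left_sign i S * left_sign i (T - S) :: 'k)"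
      using that left_sign_union[of S "T - S" i] by (simp add: Un_absorb1)
    then have k: "left_sign i T * right_sign i S = (-1) ^ card S * (left_sign i (T - S) :: 'k)"
      using left_sign_times_right_sign[OF iS(1), where 'k='k] by (metis mult.assoc mult.commute)
    have "insert i T - S = insert i (T - S)" using iS by auto
    then have "left_sign i T * (shuffle_sign S (insert i T - S) * \<alpha> S * \<beta> (insert i T - S))
        = (left_sign i T * right_sign i S) * (shuffle_sign S (T - S) * \<alpha> S * \<beta> (insert i (T - S)))"
      by (simp only: shuffle_sign_insert_right[OF iS(2)] mult_ac)
    then show ?thesis
      unfolding k grade_inv_def left_der_eq using iS(2) by (simp only: if_False mult_ac)
  qed
  have B: "left_sign i T * (shuffle_sign (insert i S) (insert i T - insert i S)
        * \<alpha> (insert i S) * \<beta> (insert i T - insert i S))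
      = shuffle_sign S (T - S) * left_der i \<alpha> S * \<beta> (T - S)" if "S \<in> Pow T" for S
  proof -
    have iS: "i \<notin> S" "i \<notin> T - S" using that iT by auto
    have "left_sign i T = (left_sign i S * left_sign i (T - S) :: 'k)"
      using that left_sign_union[of S "T - S" i] by (simp add: Un_absorb1)
    moreover have "insert i T - insert i S = T - S" using iS by auto
    ultimately show ?thesis
      unfolding left_der_eq shuffle_sign_insert_left[OF iS(1)] using iS(1)
      by (simp add: mult_ac)
  qed
  have "left_der i (wedge \<alpha> \<beta>) T = left_sign i T * wedge \<alpha> \<beta> (insert i T)"
    using iT by (simp add: left_der_eq)
  also have "\<dots> = (\<Sum>S\<in>Pow T. left_sign i T * (shuffle_sign S (insert i T - S) * \<alpha> S * \<beta> (insert i T - S)))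
      + (\<Sum>S\<in>Pow T. left_sign i T * (shuffle_sign (insert i S) (insert i T - insert i S)
          * \<alpha> (insert i S) * \<beta> (insert i T - insert i S)))"
    unfolding wedge_def sum_Pow_insert[OF iT] by (simp add: sum_distrib_left distrib_left)
  also have "\<dots> = wedge (grade_inv \<alpha>) (left_der i \<beta>) T + wedge (left_der i \<alpha>) \<beta> T"
    unfolding wedge_def by (intro arg_cong2[where f="(+)"] sum.cong refl A B)
  finally show ?thesis by simp
qed

text \<open>At a set containing i the left-hand side of the Leibniz rule vanishes; the two terms on
  the right are the same sum over subsets of T - {i} with opposite signs.\<close>
lemma left_der_wedge_in:
  assumes "i \<in> T"
  shows "wedge (left_der i \<alpha>) \<beta> T + wedge (grade_inv \<alpha>) (left_der i \<beta>) T = 0"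
proof -
  define T' where "T' = T - {i}"
  have iT': "i \<notin> T'" and T: "T = insert i T'"
    using assms by (auto simp: T'_def)
  define c where "c S = (-1) ^ card S * shuffle_sign S (T' - S) * \<alpha> (insert i S) * \<beta> (insert i (T' - S))"
    for S
  have C: "shuffle_sign S (insert i T' - S) * left_der i \<alpha> S * \<beta> (insert i T' - S) = c S"
    if "S \<in> Pow T'" for S
  proof -
    have iS: "i \<notin> S" "i \<notin> T' - S" using that iT' by auto
    have e: "insert i T' - S = insert i (T' - S)" using iS by auto
    have "shuffle_sign S (insert i T' - S) * left_der i \<alpha> S * \<beta> (insert i T' - S)
        = (left_sign i S * right_sign i S) * shuffle_sign S (T' - S) * \<alpha> (insert i S) * \<beta> (insert i (T' - S))"
      unfolding e shuffle_sign_insert_right[OF iS(2)] left_der_eq using iS(1) by (simp only: if_False mult_ac)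
    then show ?thesis
      unfolding c_def left_sign_times_right_sign[OF iS(1)] .
  qed
  have D: "shuffle_sign (insert i S) (insert i T' - insert i S) * grade_inv \<alpha> (insert i S)
        * left_der i \<beta> (insert i T' - insert i S) = - c S" if "S \<in> Pow T'" for S
  proof -
    have iS: "i \<notin> S" "i \<notin> T' - S" using that iT' by auto
    have "insert i T' - insert i S = T' - S" using iS by auto
    moreover have "card (insert i S) = Suc (card S)" using iS(1) by simp
    ultimately show ?thesis
      unfolding c_def shuffle_sign_insert_left[OF iS(1)] left_der_eq grade_inv_def using iS
      by (simp add: mult_ac)
  qed
  have "wedge (left_der i \<alpha>) \<beta> T = (\<Sum>S\<in>Pow T'. c S)"
    unfolding wedge_def T sum_Pow_insert[OF iT'] by (simp add: C)
  moreover have "wedge (grade_inv \<alpha>) (left_der i \<beta>) T = 0 + (\<Sum>S\<in>Pow T'. - c S)"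
    unfolding wedge_def T sum_Pow_insert[OF iT']
    by (intro arg_cong2[where f="(+)"] sum.neutral sum.cong ballI D refl)
      (use iT' in \<open>auto simp: left_der_eq\<close>)
  ultimately show ?thesis by (simp add: sum_negf)
qed

theorem left_der_wedge:
  "left_der i (wedge \<alpha> \<beta>) = wedge (left_der i \<alpha>) \<beta> + wedge (grade_inv \<alpha>) (left_der i \<beta>)"
proof (rule ext)
  fix T
  show "left_der i (wedge \<alpha> \<beta>) T = (wedge (left_der i \<alpha>) \<beta> + wedge (grade_inv \<alpha>) (left_der i \<beta>)) T"
    using left_der_wedge_notin[of i T] left_der_wedge_in[of i T] by (cases "i \<in> T") (simp_all add: left_der_eq)
qed

end

lemma homogeneous_add:
  "homogeneous k \<alpha> \<Longrightarrow> homogeneous k \<beta> \<Longrightarrow> homogeneous k (\<alpha> + (\<beta>::('i, 'k::comm_ring_1) ext))"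
  unfolding homogeneous_def by (metis add.right_neutral plus_fun_apply)

lemma homogeneous_scale: "homogeneous k \<alpha> \<Longrightarrow> homogeneous k (ext_scale c (\<alpha>::('i, 'k::comm_ring_1) ext))"
  unfolding homogeneous_def by (metis ext_scale_apply mult_zero_right)

lemma homogeneous_sum:
  "(\<And>j. j \<in> A \<Longrightarrow> homogeneous k (f j)) \<Longrightarrow> homogeneous k (\<Sum>j\<in>A. f j :: ('i, 'k::comm_ring_1) ext)"
proof (induction A rule: infinite_finite_induct)
  case (insert x F)
  then show ?case by (simp only: sum.insert[OF insert.hyps]) (intro homogeneous_add; simp)
qed (simp_all add: homogeneous_def)

lemma homogeneous_empty: "homogeneous k \<alpha> \<Longrightarrow> k \<noteq> 0 \<Longrightarrow> \<alpha> {} = 0"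
  unfolding homogeneous_def by force

context
  fixes \<alpha> \<beta> :: "('i::{finite,countable}, 'k::comm_ring_1) ext"
begin

lemma homogeneous_left_der:
  assumes "homogeneous k \<alpha>"
  shows "homogeneous (k - 1) (left_der i \<alpha>)"
  unfolding homogeneous_def
proof (intro allI impI)
  fix T assume "left_der i \<alpha> T \<noteq> 0"
  then have "i \<notin> T" "\<alpha> (insert i T) \<noteq> 0" by (auto simp: left_der_eq split: if_splits)
  with assms show "card T = k - 1" unfolding homogeneous_def by force
qed

lemma left_der_homogeneous_0:
  assumes "homogeneous 0 \<alpha>"
  shows "left_der i \<alpha> = 0"
proof -
  have "\<alpha> (insert i T) = 0" for T
    using assms unfolding homogeneous_def by force
  then show ?thesis by (auto simp: left_der_eq)
qed

lemma grade_inv_homogeneous: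
  assumes "homogeneous k \<alpha>"
  shows "grade_inv \<alpha> = ext_scale ((-1) ^ k) \<alpha>"
proof (rule ext)
  fix S
  show "grade_inv \<alpha> S = ext_scale ((-1) ^ k) \<alpha> S"
    using assms unfolding homogeneous_def grade_inv_def by (cases "\<alpha> S = 0") simp_all
qed

lemma right_der_homogeneous:
  assumes "homogeneous k \<alpha>"
  shows "right_der i \<alpha> = ext_scale ((-1) ^ (k - 1)) (left_der i \<alpha>)"
proof (rule ext)
  fix T
  show "right_der i \<alpha> T = ext_scale ((-1) ^ (k - 1)) (left_der i \<alpha>) T"
  proof (cases "i \<in> T \<or> \<alpha> (insert i T) = 0")
    case True
    then show ?thesis by (auto simp: right_der_eq left_der_eq)
  next
    case False
    then have iT: "i \<notin> T" and "card (insert i T) = k"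
      using assms unfolding homogeneous_def by auto
    then have card_T: "k - 1 = card T"
      by simp
    have "right_sign i T = (left_sign i T * (left_sign i T * right_sign i T) :: 'k)"
      by simp
    also have "\<dots> = left_sign i T * (-1) ^ (k - 1)"
      by (simp only: left_sign_times_right_sign[OF iT] card_T)
    finally show ?thesis
      using iT by (simp add: right_der_eq left_der_eq mult_ac)
  qed
qed

lemma left_der_wedge_homogeneous:
  assumes "homogeneous k \<alpha>"
  shows "left_der i (wedge \<alpha> \<beta>) = wedge (left_der i \<alpha>) \<beta> + ext_scale ((-1) ^ k) (wedge \<alpha> (left_der i \<beta>))"
  unfolding left_der_wedge grade_inv_homogeneous[OF assms] wedge_scale_left ..

lemma homogeneous_wedge:
  assumes "homogeneous k \<alpha>" "homogeneous l \<beta>"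
  shows "homogeneous (k + l) (wedge \<alpha> \<beta>)"
  unfolding homogeneous_def
proof (intro allI impI)
  fix U assume "wedge \<alpha> \<beta> U \<noteq> 0"
  then obtain S where "S \<in> Pow U" "shuffle_sign S (U - S) * \<alpha> S * \<beta> (U - S) \<noteq> 0"
    unfolding wedge_def by (meson sum.not_neutral_contains_not_neutral)
  then have S: "S \<subseteq> U" "\<alpha> S \<noteq> 0" "\<beta> (U - S) \<noteq> 0"
    by auto
  then have "card S = k" "card (U - S) = l"
    using assms unfolding homogeneous_def by simp_all
  moreover have "card U = card S + card (U - S)"
    using S(1) by (simp add: card_Diff_subset card_mono)
  ultimately show "card U = k + l" by simp
qed

end

lemma ext_eq_0_if_fourth_left_ders_0:
  fixes Q :: "('i::{finite,countable}, 'k::comm_ring_1) ext"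
  assumes hQ: "homogeneous 4 Q"
    and ders: "\<And>a b c d. left_der a (left_der b (left_der c (left_der d Q))) {} = 0"
  shows "Q = 0"
proof (rule ext, rule ccontr)
  fix U assume nz: "Q U \<noteq> 0 U"
  then have "card U = Suc (Suc (Suc (Suc 0)))"
    using hQ unfolding homogeneous_def by simp
  then obtain a b c d where U: "U = insert d (insert c (insert b {a}))"
    and notin: "d \<notin> insert c (insert b {a})" "c \<notin> insert b {a}" "b \<notin> {a}"
    by (metis card_1_singletonE card_eq_SucD numeral_1_eq_Suc_0 numerals(1))
  have "Q U = left_sign d (insert c (insert b {a})) * (left_sign c (insert b {a})
      * (left_sign b {a} * left_der a (left_der b (left_der c (left_der d Q))) {}))"
    using notin by (simp add: left_der_empty left_der_eq U)
  with ders nz show False by simp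
qed

lemma fourth_left_der_wedge:
  fixes \<alpha> \<beta> :: "('i::{finite,countable}, 'k::comm_ring_1) ext"
  assumes ha: "homogeneous 2 \<alpha>" and hb: "homogeneous 2 \<beta>"
  shows "left_der a (left_der b (left_der c (left_der d (wedge \<alpha> \<beta>)))) {} =
      left_der a (left_der b \<alpha>) {} * left_der c (left_der d \<beta>) {}
    + left_der c (left_der d \<alpha>) {} * left_der a (left_der b \<beta>) {}
    - left_der a (left_der c \<alpha>) {} * left_der b (left_der d \<beta>) {}
    - left_der b (left_der d \<alpha>) {} * left_der a (left_der c \<beta>) {}
    + left_der a (left_der d \<alpha>) {} * left_der b (left_der c \<beta>) {}
    + left_der b (left_der c \<alpha>) {} * left_der a (left_der d \<beta>) {}"
proof -
  have h1a: "homogeneous 1 (left_der x \<alpha>)" for x using homogeneous_left_der[OF ha] by simp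
  have h1b: "homogeneous 1 (left_der x \<beta>)" for x using homogeneous_left_der[OF hb] by simp
  have h0a: "homogeneous 0 (left_der x (left_der y \<alpha>))" for x y using homogeneous_left_der[OF h1a] by simp
  have h0b: "homogeneous 0 (left_der x (left_der y \<beta>))" for x y using homogeneous_left_der[OF h1b] by simp
  have z3a: "left_der x (left_der y (left_der z \<alpha>)) = 0" for x y z by (rule left_der_homogeneous_0[OF h0a])
  have z3b: "left_der x (left_der y (left_der z \<beta>)) = 0" for x y z by (rule left_der_homogeneous_0[OF h0b])
  have e: "\<alpha> {} = 0" "\<beta> {} = 0" "left_der x \<alpha> {} = 0" "left_der x \<beta> {} = 0" for x
    by (simp_all add: homogeneous_empty[OF ha] homogeneous_empty[OF hb]
        homogeneous_empty[OF h1a] homogeneous_empty[OF h1b])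
  have leib2: "left_der i (wedge \<alpha> \<gamma>) = wedge (left_der i \<alpha>) \<gamma> + wedge \<alpha> (left_der i \<gamma>)" for i \<gamma>
    using left_der_wedge_homogeneous[OF ha] by simp
  have leib1: "left_der i (wedge (left_der x \<alpha>) \<gamma>) = wedge (left_der i (left_der x \<alpha>)) \<gamma> - wedge (left_der x \<alpha>) (left_der i \<gamma>)"
    for i x \<gamma>
    using left_der_wedge_homogeneous[OF h1a] by simp
  have leib0: "left_der i (wedge (left_der x (left_der y \<alpha>)) \<gamma>) = wedge (left_der x (left_der y \<alpha>)) (left_der i \<gamma>)"
    for i x y \<gamma>
    using left_der_wedge_homogeneous[OF h0a] left_der_homogeneous_0[OF h0a] by simp
  have s2: "left_der c (left_der d (wedge \<alpha> \<beta>)) =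
      wedge (left_der c (left_der d \<alpha>)) \<beta> - wedge (left_der d \<alpha>) (left_der c \<beta>)
    + wedge (left_der c \<alpha>) (left_der d \<beta>) + wedge \<alpha> (left_der c (left_der d \<beta>))"
    unfolding leib2 left_der_add leib1 by simp
  have s3: "left_der b (left_der c (left_der d (wedge \<alpha> \<beta>))) =
      wedge (left_der c (left_der d \<alpha>)) (left_der b \<beta>)
    - (wedge (left_der b (left_der d \<alpha>)) (left_der c \<beta>) - wedge (left_der d \<alpha>) (left_der b (left_der c \<beta>)))
    + (wedge (left_der b (left_der c \<alpha>)) (left_der d \<beta>) - wedge (left_der c \<alpha>) (left_der b (left_der d \<beta>)))
    + wedge (left_der b \<alpha>) (left_der c (left_der d \<beta>))"
    unfolding s2 left_der_add left_der_diff leib0 leib1 leib2 z3b by simp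
  show ?thesis
    unfolding s3 left_der_add left_der_diff leib0 leib1 z3a z3b
    by (simp add: wedge_empty e algebra_simps)
qed

definition lower :: "('i::finite \<Rightarrow> 'i \<Rightarrow> 'k::comm_ring_1) \<Rightarrow> ('i \<Rightarrow> 'k) \<Rightarrow> 'i \<Rightarrow> 'k" where
  "lower G u j = (\<Sum>i\<in>UNIV. u i * G i j)"

lemma lower_zero [simp]: "lower G 0 j = 0"
  by (simp add: lower_def)

lemma lower_add: "lower G (u + v) j = lower G u j + lower G v j"
  by (simp add: lower_def algebra_simps sum.distrib)

lemma lower_scale: "lower G (\<lambda>i. c * u i) j = c * lower G u j"
  by (simp add: lower_def algebra_simps sum_distrib_left)

lemma bform_eq_sum_lower: "bform G x y = (\<Sum>j\<in>UNIV. lower G x j * y j)"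
  unfolding bform_def lower_def by (subst sum.swap) (simp add: sum_distrib_right)

lemma bform_eq_sum_lower_right:
  assumes "symmetric_form G"
  shows "bform G x y = (\<Sum>i\<in>UNIV. x i * lower G y i)"
  using assms unfolding bform_def lower_def symmetric_form_def by (simp add: sum_distrib_left mult_ac)

lemma nondegenerate_form_iff_lower:
  fixes G :: "'i::finite \<Rightarrow> 'i \<Rightarrow> 'k::field"
  shows "nondegenerate_form G \<longleftrightarrow> (\<forall>x. lower G x = 0 \<longrightarrow> x = 0)"
proof -
  have "(\<forall>y. bform G x y = 0) \<longleftrightarrow> lower G x = 0" for x
  proof
    assume "\<forall>y. bform G x y = 0"
    then have "bform G x (\<lambda>t. if t = j then 1 else 0) = 0" for j
      by blast
    then show "lower G x = 0"
      by (simp add: bform_eq_sum_lower fun_eq_iff if_distrib cong: if_cong)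
  qed (simp add: bform_eq_sum_lower)
  then show ?thesis
    unfolding nondegenerate_form_def by simp
qed

lemma lower_surj:
  fixes G :: "'i::finite \<Rightarrow> 'i \<Rightarrow> 'k::field"
  assumes "nondegenerate_form G"
  shows "\<exists>x. lower G x = f"
proof -
  define A :: "'k^'i^'i" where "A = (\<chi> i j. G j i)"
  have lower_A: "lower G (\<lambda>c. v $ c) = (\<lambda>t. (A *v v) $ t)" for v
    unfolding lower_def A_def matrix_vector_mult_def by (simp add: mult.commute)
  have "inj ((*v) A)"
  proof (rule injI)
    fix v v' assume "A *v v = A *v v'"
    then have "lower G (\<lambda>c. v $ c - v' $ c) = 0"
      using lower_A[of v] lower_A[of v']
      by (simp add: lower_def fun_eq_iff algebra_simps sum_subtractf)
    then have "(\<lambda>c. v $ c - v' $ c) = 0"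
      using assms unfolding nondegenerate_form_iff_lower by blast
    then show "v = v'"
      by (simp add: vec_eq_iff fun_eq_iff)
  qed
  then have "surj ((*v) A)"
    using vec.linear_inj_imp_surj[OF matrix_vector_mul_linear_gen] by blast
  then obtain v where "A *v v = (\<chi> t. f t)"
    by (metis surjD)
  then have "lower G (\<lambda>c. v $ c) = f"
    unfolding lower_A by (simp add: fun_eq_iff)
  then show ?thesis by blast
qed

definition ext_const :: "'k::zero \<Rightarrow> ('i, 'k) ext" where
  "ext_const c = (\<lambda>T. if T = {} then c else 0)"

lemma left_der_vext: "left_der i (vext u :: ('i::{finite,countable}, 'k::comm_ring_1) ext) = ext_const (u i)"
  by (rule ext) (auto simp: left_der_eq ext_const_def vext_def card_insert_if)

lemma right_der_vext: "right_der i (vext u :: ('i::{finite,countable}, 'k::comm_ring_1) ext) = ext_const (u i)"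
  by (rule ext) (auto simp: right_der_eq ext_const_def vext_def card_insert_if)

lemma wedge_ext_const_left: "wedge (ext_const c) \<beta> = ext_scale c (\<beta> :: ('i::{finite,countable}, 'k::comm_ring_1) ext)"
proof (rule ext)
  fix U
  have "wedge (ext_const c) \<beta> U = (\<Sum>S\<in>Pow U. if S = {} then c * \<beta> U else 0)"
    unfolding wedge_def by (rule sum.cong) (auto simp: ext_const_def shuffle_sign_def)
  then show "wedge (ext_const c) \<beta> U = ext_scale c \<beta> U"
    by simp
qed

lemma wedge_ext_const_right: "wedge \<beta> (ext_const c) = ext_scale c (\<beta> :: ('i::{finite,countable}, 'k::comm_ring_1) ext)"
proof (rule ext)
  fix U
  have "wedge \<beta> (ext_const c) U = (\<Sum>S\<in>Pow U. if S = U then c * \<beta> U else 0)"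
    unfolding wedge_def
  proof (rule sum.cong)
    fix S assume "S \<in> Pow U"
    then show "shuffle_sign S (U - S) * \<beta> S * ext_const c (U - S) = (if S = U then c * \<beta> U else 0)"
      by (cases "S = U") (auto simp: ext_const_def shuffle_sign_def)
  qed simp
  then show "wedge \<beta> (ext_const c) U = ext_scale c \<beta> U"
    by (simp add: sum.delta')
qed

lemma poisson_apply:
  fixes \<beta> :: "('i::{finite,countable}, 'k::comm_ring_1) ext"
  shows "poisson G \<alpha> \<beta> T = (\<Sum>i\<in>UNIV. \<Sum>j\<in>UNIV. G i j * wedge (right_der i \<alpha>) (left_der j \<beta>) T)"
  unfolding poisson_def by (simp add: sum_fun_apply)

lemma poisson_vext_left:
  fixes \<beta> :: "('i::{finite,countable}, 'k::comm_ring_1) ext"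
  shows "poisson G (vext u) \<beta> = (\<Sum>j\<in>UNIV. ext_scale (lower G u j) (left_der j \<beta>))"
proof (rule ext)
  fix T
  have "poisson G (vext u) \<beta> T = (\<Sum>i\<in>UNIV. \<Sum>j\<in>UNIV. G i j * (u i * left_der j \<beta> T))"
    unfolding poisson_apply right_der_vext wedge_ext_const_left by simp
  also have "\<dots> = (\<Sum>j\<in>UNIV. \<Sum>i\<in>UNIV. u i * G i j * left_der j \<beta> T)"
    by (subst sum.swap) (simp add: algebra_simps)
  finally show "poisson G (vext u) \<beta> T = (\<Sum>j\<in>UNIV. ext_scale (lower G u j) (left_der j \<beta>)) T"
    by (simp add: sum_fun_apply lower_def sum_distrib_right)
qed

lemma poisson_vext_right:
  fixes \<beta> :: "('i::{finite,countable}, 'k::comm_ring_1) ext"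
  assumes "homogeneous k \<beta>" and "symmetric_form G"
  shows "poisson G \<beta> (vext v) = (\<Sum>i\<in>UNIV. ext_scale ((-1) ^ (k - 1) * lower G v i) (left_der i \<beta>))"
proof (rule ext)
  fix T
  have "poisson G \<beta> (vext v) T = (\<Sum>i\<in>UNIV. \<Sum>j\<in>UNIV. G i j * (v j * ((-1) ^ (k - 1) * left_der i \<beta> T)))"
    unfolding poisson_apply right_der_homogeneous[OF assms(1)] left_der_vext wedge_ext_const_right
    by (simp add: mult_ac)
  then show "poisson G \<beta> (vext v) T = (\<Sum>i\<in>UNIV. ext_scale ((-1) ^ (k - 1) * lower G v i) (left_der i \<beta>)) T"
    using assms(2) unfolding lower_def symmetric_form_def by (simp add: sum_fun_apply sum_distrib_right sum_distrib_left mult_ac)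
qed

lemma vext_of_homogeneous_1:
  fixes \<beta> :: "('i::{finite,countable}, 'k::comm_ring_1) ext"
  assumes "homogeneous 1 \<beta>"
  shows "\<beta> = vext (\<lambda>m. \<beta> {m})"
proof (rule ext)
  fix S
  show "\<beta> S = vext (\<lambda>m. \<beta> {m}) S"
  proof (cases "card S = 1")
    case True
    then show ?thesis by (auto simp: vext_def card_1_singleton_iff)
  next
    case False
    then show ?thesis using assms by (auto simp: vext_def homogeneous_def)
  qed
qed

lemma vext_inj:
  assumes "vext u = vext v"
  shows "u = v"
proof (rule ext)
  fix m
  have "vext u {m} = vext v {m}" using assms by simp
  then show "u m = v m" by (simp add: vext_def)
qed

section \<open>The bracket of a cubic potential\<close>

definition pot_coeff :: "('i::{finite,countable}, 'k::comm_ring_1) ext \<Rightarrow> 'i \<Rightarrow> 'i \<Rightarrow> 'i \<Rightarrow> 'k" where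
  "pot_coeff P x y z = left_der x (left_der y (left_der z P)) {}"

definition pot_bracket :: "('i::{finite,countable} \<Rightarrow> 'i \<Rightarrow> 'k::comm_ring_1) \<Rightarrow> ('i, 'k) ext
    \<Rightarrow> ('i \<Rightarrow> 'k) \<Rightarrow> ('i \<Rightarrow> 'k) \<Rightarrow> 'i \<Rightarrow> 'k" where
  "pot_bracket G P x y = (\<lambda>m. \<Sum>j\<in>UNIV. \<Sum>l\<in>UNIV. lower G x j * lower G y l * pot_coeff P m j l)"

lemma pot_coeff_swap12: "pot_coeff P x y z = - pot_coeff P y x z"
  unfolding pot_coeff_def by (subst left_der_anticomm) simp

lemma pot_coeff_swap23: "pot_coeff P x y z = - pot_coeff P x z y"
  unfolding pot_coeff_def by (subst (2) left_der_anticomm) (simp add: left_der_uminus)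

lemma pot_coeff_cycle: "pot_coeff P x y z = pot_coeff P y z x"
  using pot_coeff_swap12[of P x y z] pot_coeff_swap23[of P y x z] by simp

lemma pot_coeff_add: "pot_coeff (P + P') x y z = pot_coeff P x y z + pot_coeff P' x y z"
  unfolding pot_coeff_def by (simp add: left_der_add)

lemma pot_coeff_nonzero:
  assumes "pot_coeff P x y z \<noteq> 0"
  shows "P {x, y, z} \<noteq> 0 \<and> x \<noteq> y \<and> y \<noteq> z \<and> x \<noteq> z"
proof -
  have "insert z (insert y {x}) = {x, y, z}" by auto
  then show ?thesis
    using assms unfolding pot_coeff_def left_der_empty by (auto simp: left_der_eq split: if_splits)
qed

theorem poisson_vext_vext_potential:
  fixes P :: "('i::{finite,countable}, 'k::comm_ring_1) ext"
  assumes "homogeneous 3 P"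
  shows "poisson G (vext x) (poisson G (vext y) P) = vext (pot_bracket G P x y)"
proof -
  let ?g = "poisson G (vext x) (poisson G (vext y) P)"
  have g: "?g = (\<Sum>j\<in>UNIV. ext_scale (lower G x j) (\<Sum>l\<in>UNIV. ext_scale (lower G y l) (left_der j (left_der l P))))"
    unfolding poisson_vext_left left_der_sum left_der_scale ..
  have "homogeneous 1 (left_der j (left_der l P))" for j l
    using homogeneous_left_der[OF homogeneous_left_der[OF assms]] by simp
  then have "homogeneous 1 ?g"
    unfolding g by (intro homogeneous_sum homogeneous_scale)
  then have "?g = vext (\<lambda>m. ?g {m})"
    by (rule vext_of_homogeneous_1)
  also have "(\<lambda>m. ?g {m}) = pot_bracket G P x y"
    unfolding g pot_bracket_def pot_coeff_def left_der_empty[symmetric] left_der_sum left_der_scale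
    by (simp add: sum_fun_apply sum_distrib_left mult.assoc)
  finally show ?thesis .
qed

definition pot_pairing :: "('i::{finite,countable} \<Rightarrow> 'i \<Rightarrow> 'k::comm_ring_1) \<Rightarrow> ('i, 'k) ext
    \<Rightarrow> 'i \<Rightarrow> 'i \<Rightarrow> 'i \<Rightarrow> 'i \<Rightarrow> 'k" where
  "pot_pairing G P x y z w = (\<Sum>i\<in>UNIV. \<Sum>j\<in>UNIV. G i j * (pot_coeff P x y i * pot_coeff P z w j))"

lemma pot_pairing_swap_pairs:
  assumes "symmetric_form G"
  shows "pot_pairing G P x y z w = pot_pairing G P z w x y"
  using assms unfolding pot_pairing_def symmetric_form_def by (subst sum.swap) (simp add: mult_ac)

lemma pot_pairing_anti: "pot_pairing G P x y z w = - pot_pairing G P y x z w"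
  unfolding pot_pairing_def by (subst pot_coeff_swap12) (simp add: sum_negf[symmetric])

definition jacobi_coeff :: "('i::{finite,countable} \<Rightarrow> 'i \<Rightarrow> 'k::comm_ring_1) \<Rightarrow> ('i, 'k) ext
    \<Rightarrow> 'i \<Rightarrow> 'i \<Rightarrow> 'i \<Rightarrow> 'i \<Rightarrow> 'k" where
  "jacobi_coeff G P m j r s = pot_pairing G P r s m j + pot_pairing G P s j m r + pot_pairing G P j r m s"

theorem fourth_left_der_poisson_self:
  fixes P :: "('i::{finite,countable}, 'k::comm_ring_1) ext"
  assumes hP: "homogeneous 3 P" and G_sym: "symmetric_form G"
  shows "left_der a (left_der b (left_der c (left_der d (poisson G P P)))) {} = 2 * jacobi_coeff G P a b c d"
proof -
  have h2: "homogeneous 2 (left_der i P)" for i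
    using homogeneous_left_der[OF hP] by simp
  have "poisson G P P = (\<Sum>i\<in>UNIV. \<Sum>j\<in>UNIV. ext_scale (G i j) (wedge (left_der i P) (left_der j P)))"
    unfolding poisson_def right_der_homogeneous[OF hP] wedge_scale_left by simp
  then have "left_der a (left_der b (left_der c (left_der d (poisson G P P)))) {} =
     (\<Sum>i\<in>UNIV. \<Sum>j\<in>UNIV. G i j * (pot_coeff P a b i * pot_coeff P c d j + pot_coeff P c d i * pot_coeff P a b j
       - pot_coeff P a c i * pot_coeff P b d j - pot_coeff P b d i * pot_coeff P a c j
       + pot_coeff P a d i * pot_coeff P b c j + pot_coeff P b c i * pot_coeff P a d j))"
    by (simp add: left_der_sum left_der_scale sum_fun_apply fourth_left_der_wedge[OF h2 h2] pot_coeff_def)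
  also have "\<dots> = pot_pairing G P a b c d + pot_pairing G P c d a b
      - pot_pairing G P a c b d - pot_pairing G P b d a c
      + pot_pairing G P a d b c + pot_pairing G P b c a d"
    unfolding pot_pairing_def by (simp add: sum.distrib sum_subtractf algebra_simps)
  also have "\<dots> = 2 * jacobi_coeff G P a b c d"
    unfolding jacobi_coeff_def
    using pot_pairing_swap_pairs[OF G_sym, of P c d a b] pot_pairing_swap_pairs[OF G_sym, of P b c a d]
      pot_pairing_swap_pairs[OF G_sym, of P b d a c] pot_pairing_anti[of G P d b a c]
    by simp
  finally show ?thesis .
qed

section \<open>The Jacobi identity of a potential bracket\<close>

definition jacobiator :: "('v::plus \<Rightarrow> 'v \<Rightarrow> 'v) \<Rightarrow> 'v \<Rightarrow> 'v \<Rightarrow> 'v \<Rightarrow> 'v" where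
  "jacobiator L x y z = L x (L y z) + L y (L z x) + L z (L x y)"

definition jacobi_identity :: "('v::{plus,zero} \<Rightarrow> 'v \<Rightarrow> 'v) \<Rightarrow> bool" where
  "jacobi_identity L \<longleftrightarrow> (\<forall>x y z. jacobiator L x y z = 0)"

lemma sum_swap3: "(\<Sum>l\<in>A. \<Sum>r\<in>B. \<Sum>s\<in>C. f l r s) = (\<Sum>r\<in>B. \<Sum>s\<in>C. \<Sum>l\<in>A. f l r s)"
  by (subst sum.swap) (rule sum.cong[OF refl], rule sum.swap)

lemma lower_pot_bracket:
  "lower G (pot_bracket G P y z) l
    = (\<Sum>r\<in>UNIV. \<Sum>s\<in>UNIV. lower G y r * lower G z s * (\<Sum>i\<in>UNIV. G i l * pot_coeff P r s i))"
proof -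
  have "lower G (pot_bracket G P y z) l
      = (\<Sum>i\<in>UNIV. (\<Sum>r\<in>UNIV. \<Sum>s\<in>UNIV. lower G y r * lower G z s * pot_coeff P i r s) * G i l)"
    unfolding lower_def[of G "pot_bracket G P y z"] by (simp only: pot_bracket_def)
  also have "\<dots> = (\<Sum>i\<in>UNIV. \<Sum>r\<in>UNIV. \<Sum>s\<in>UNIV. lower G y r * lower G z s * (G i l * pot_coeff P r s i))"
  proof (rule sum.cong[OF refl])
    fix i
    have "pot_coeff P i r s = pot_coeff P r s i" for r s
      by (rule pot_coeff_cycle)
    then show "(\<Sum>r\<in>UNIV. \<Sum>s\<in>UNIV. lower G y r * lower G z s * pot_coeff P i r s) * G i l
        = (\<Sum>r\<in>UNIV. \<Sum>s\<in>UNIV. lower G y r * lower G z s * (G i l * pot_coeff P r s i))"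
      by (simp add: sum_distrib_right sum_distrib_left mult_ac)
  qed
  also have "\<dots> = (\<Sum>r\<in>UNIV. \<Sum>s\<in>UNIV. \<Sum>i\<in>UNIV. lower G y r * lower G z s * (G i l * pot_coeff P r s i))"
    by (rule sum_swap3)
  finally show ?thesis
    by (simp add: sum_distrib_left)
qed

lemma pot_bracket_pot_bracket:
  "pot_bracket G P x (pot_bracket G P y z) m
    = (\<Sum>j\<in>UNIV. \<Sum>r\<in>UNIV. \<Sum>s\<in>UNIV. lower G x j * lower G y r * lower G z s * pot_pairing G P r s m j)"
proof -
  have pairing: "(\<Sum>l\<in>UNIV. (\<Sum>i\<in>UNIV. G i l * pot_coeff P r s i) * pot_coeff P m j l) = pot_pairing G P r s m j"
    for r s j
    unfolding pot_pairing_def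
    by (subst sum.swap) (simp add: sum_distrib_right sum_distrib_left mult_ac)
  have "pot_bracket G P x (pot_bracket G P y z) m = (\<Sum>j\<in>UNIV. \<Sum>l\<in>UNIV. \<Sum>r\<in>UNIV. \<Sum>s\<in>UNIV.
      lower G x j * lower G y r * lower G z s * ((\<Sum>i\<in>UNIV. G i l * pot_coeff P r s i) * pot_coeff P m j l))"
    unfolding pot_bracket_def[of G P x] lower_pot_bracket
    by (simp add: sum_distrib_right sum_distrib_left mult_ac)
  also have "\<dots> = (\<Sum>j\<in>UNIV. \<Sum>r\<in>UNIV. \<Sum>s\<in>UNIV. \<Sum>l\<in>UNIV.
      lower G x j * lower G y r * lower G z s * ((\<Sum>i\<in>UNIV. G i l * pot_coeff P r s i) * pot_coeff P m j l))"
    by (rule sum.cong[OF refl], rule sum_swap3)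
  finally show ?thesis
    by (simp add: sum_distrib_left[symmetric] pairing)
qed

theorem pot_bracket_jacobiator:
  "jacobiator (pot_bracket G P) x y z m
   = (\<Sum>j\<in>UNIV. \<Sum>r\<in>UNIV. \<Sum>s\<in>UNIV. lower G x j * lower G y r * lower G z s * jacobi_coeff G P m j r s)"
proof -
  have "pot_bracket G P y (pot_bracket G P z x) m
      = (\<Sum>j\<in>UNIV. \<Sum>r\<in>UNIV. \<Sum>s\<in>UNIV. lower G y r * lower G z s * lower G x j * pot_pairing G P s j m r)"
    unfolding pot_bracket_pot_bracket by (rule sum_swap3[symmetric])
  moreover have "pot_bracket G P z (pot_bracket G P x y) m
      = (\<Sum>j\<in>UNIV. \<Sum>r\<in>UNIV. \<Sum>s\<in>UNIV. lower G z s * lower G x j * lower G y r * pot_pairing G P j r m s)"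
    unfolding pot_bracket_pot_bracket by (rule sum_swap3)
  ultimately show ?thesis
    unfolding jacobiator_def plus_fun_apply pot_bracket_pot_bracket[of G P x y z] jacobi_coeff_def
    by (simp add: sum.distrib[symmetric] distrib_left mult_ac)
qed

lemma sum_delta3:
  fixes f :: "'i::finite \<Rightarrow> 'i \<Rightarrow> 'i \<Rightarrow> 'k::comm_ring_1"
  shows "(\<Sum>j\<in>UNIV. \<Sum>r\<in>UNIV. \<Sum>s\<in>UNIV. (if j = b then 1 else 0) * (if r = c then 1 else 0)
      * (if s = d then 1 else 0) * f j r s) = f b c d"
proof -
  have delta: "(\<Sum>s\<in>UNIV. (if s = d then 1 else 0) * g s) = g d" for g :: "'i \<Rightarrow> 'k" and d
    by (simp add: if_distrib if_distribR cong: if_cong)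
  show ?thesis
    by (simp only: mult.assoc sum_distrib_left[symmetric] delta)
qed

lemma jacobi_coeff_eq_jacobiator:
  fixes G :: "'i::{finite,countable} \<Rightarrow> 'i \<Rightarrow> 'k::field"
  assumes "nondegenerate_form G"
  obtains x y z where "\<And>m. jacobi_coeff G P m j r s = jacobiator (pot_bracket G P) x y z m"
proof -
  obtain x y z where "lower G x = (\<lambda>t. if t = j then 1 else 0)" "lower G y = (\<lambda>t. if t = r then 1 else 0)"
    "lower G z = (\<lambda>t. if t = s then 1 else 0)"
    using lower_surj[OF assms] by meson
  then have "jacobi_coeff G P m j r s = jacobiator (pot_bracket G P) x y z m" for m
    unfolding pot_bracket_jacobiator by (simp only: sum_delta3)
  then show ?thesis ..
qed

lemma jacobi_identity_pot_bracket_iff: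
  fixes G :: "'i::{finite,countable} \<Rightarrow> 'i \<Rightarrow> 'k::field"
  assumes "nondegenerate_form G"
  shows "jacobi_identity (pot_bracket G P) \<longleftrightarrow> (\<forall>m j r s. jacobi_coeff G P m j r s = 0)"
proof
  assume J: "jacobi_identity (pot_bracket G P)"
  show "\<forall>m j r s. jacobi_coeff G P m j r s = 0"
  proof (intro allI)
    fix m j r s
    obtain x y z where "jacobi_coeff G P m j r s = jacobiator (pot_bracket G P) x y z m"
      using jacobi_coeff_eq_jacobiator[OF assms] by metis
    with J show "jacobi_coeff G P m j r s = 0"
      unfolding jacobi_identity_def by simp
  qed
next
  assume "\<forall>m j r s. jacobi_coeff G P m j r s = 0"
  then show "jacobi_identity (pot_bracket G P)"
    unfolding jacobi_identity_def by (simp add: fun_eq_iff pot_bracket_jacobiator)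
qed

lemma poisson_self_eq_0_iff:
  fixes P :: "('i::{finite,countable}, 'k::field_char_0) ext"
  assumes "homogeneous 3 P" "symmetric_form G"
  shows "poisson G P P = 0 \<longleftrightarrow> (\<forall>m j r s. jacobi_coeff G P m j r s = 0)"
proof
  assume "poisson G P P = 0"
  then show "\<forall>m j r s. jacobi_coeff G P m j r s = 0"
    using fourth_left_der_poisson_self[OF assms] by simp
next
  assume jacobi: "\<forall>m j r s. jacobi_coeff G P m j r s = 0"
  have "homogeneous 2 (left_der l P)" for l
    using homogeneous_left_der[OF assms(1)] by simp
  then have "homogeneous 4 (poisson G P P)"
    unfolding poisson_def right_der_homogeneous[OF assms(1)] wedge_scale_left
    using homogeneous_wedge by (intro homogeneous_sum homogeneous_scale) fastforce
  then show "poisson G P P = 0"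
    by (rule ext_eq_0_if_fourth_left_ders_0) (simp add: fourth_left_der_poisson_self[OF assms] jacobi)
qed

lemma jacobi_coeff_alternating:
  fixes P :: "('i::{finite,countable}, 'k::field_char_0) ext"
  assumes "homogeneous 3 P" "symmetric_form G"
  shows "jacobi_coeff G P m j r s = - jacobi_coeff G P j m r s"
    and "jacobi_coeff G P m j r s = - jacobi_coeff G P m r j s"
    and "jacobi_coeff G P m j r s = - jacobi_coeff G P m j s r"
proof -
  have "2 * jacobi_coeff G P m j r s = - (2 * jacobi_coeff G P j m r s)"
    unfolding fourth_left_der_poisson_self[OF assms, symmetric] by (subst left_der_anticomm) simp
  then show "jacobi_coeff G P m j r s = - jacobi_coeff G P j m r s" by simp
  have "2 * jacobi_coeff G P m j r s = - (2 * jacobi_coeff G P m r j s)"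
    unfolding fourth_left_der_poisson_self[OF assms, symmetric]
    by (subst (2) left_der_anticomm) (simp add: left_der_uminus)
  then show "jacobi_coeff G P m j r s = - jacobi_coeff G P m r j s" by simp
  have "2 * jacobi_coeff G P m j r s = - (2 * jacobi_coeff G P m j s r)"
    unfolding fourth_left_der_poisson_self[OF assms, symmetric]
    by (subst (3) left_der_anticomm) (simp add: left_der_uminus)
  then show "jacobi_coeff G P m j r s = - jacobi_coeff G P m j s r" by simp
qed

lemma sum_UNIV_Plus:
  fixes f :: "'x::finite + 'y::finite \<Rightarrow> 'k::comm_monoid_add"
  shows "(\<Sum>i\<in>UNIV. f i) = (\<Sum>a\<in>UNIV. f (Inl a)) + (\<Sum>b\<in>UNIV. f (Inr b))"
proof -
  have "(\<Sum>i\<in>UNIV. f i) = sum f (UNIV <+> UNIV)"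
    by (simp only: UNIV_Plus_UNIV)
  also have "\<dots> = sum (f \<circ> Inl) UNIV + sum (f \<circ> Inr) UNIV"
    by (rule sum.Plus[OF finite finite])
  finally show ?thesis
    by (simp only: o_def)
qed

lemma sum_UNIV_dspace:
  fixes f :: "('a::finite + 'a) + 'b::finite \<Rightarrow> 'k::comm_monoid_add"
  shows "(\<Sum>i\<in>UNIV. f i) = (\<Sum>a\<in>UNIV. f (Inl (Inl a))) + (\<Sum>a\<in>UNIV. f (Inl (Inr a))) + (\<Sum>b\<in>UNIV. f (Inr b))"
  unfolding sum_UNIV_Plus[of f] sum_UNIV_Plus[of "\<lambda>a. f (Inl a)"] ..

lemma fun_eq_dspace:
  fixes f g :: "('a + 'a) + 'b \<Rightarrow> 'z"
  assumes "\<And>a. f (Inl (Inl a)) = g (Inl (Inl a))" "\<And>a. f (Inl (Inr a)) = g (Inl (Inr a))"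
    "\<And>b. f (Inr b) = g (Inr b)"
  shows "f = g"
proof (rule ext)
  fix t
  show "f t = g t"
  proof (cases t)
    case (Inl t')
    then show ?thesis by (cases t') (simp_all add: assms)
  next
    case (Inr b)
    then show ?thesis by (simp add: assms)
  qed
qed

lemma symmetric_gram_d: "symmetric_form Bm \<Longrightarrow> symmetric_form (gram_d Bm)"
  unfolding symmetric_form_def gram_d_def by (auto split: sum.splits)

lemma gram_d_simps [simp]:
  "gram_d Bm (Inl (Inl a)) (Inl (Inl a')) = 0"
  "gram_d Bm (Inl (Inl a)) (Inl (Inr a')) = (if a = a' then 1 else 0)"
  "gram_d Bm (Inl (Inr a)) (Inl (Inl a')) = (if a = a' then 1 else 0)"
  "gram_d Bm (Inl (Inr a)) (Inl (Inr a')) = 0"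
  "gram_d Bm (Inl x) (Inr b) = 0"
  "gram_d Bm (Inr b) (Inl x) = 0"
  "gram_d Bm (Inr b) (Inr b') = Bm b b'"
  by (simp_all add: gram_d_def split: sum.splits)

lemma dcoord_simps [simp]:
  "dcoord f s w (Inl (Inl a)) = f a" "dcoord f s w (Inl (Inr a)) = s a" "dcoord f s w (Inr b) = w b"
  by (simp_all add: dcoord_def)

definition hs_part :: "(('a + 'a) + 'b \<Rightarrow> 'k) \<Rightarrow> 'a \<Rightarrow> 'k" where
  "hs_part x = (\<lambda>a. x (Inl (Inl a)))"

definition h_part :: "(('a + 'a) + 'b \<Rightarrow> 'k) \<Rightarrow> 'a \<Rightarrow> 'k" where
  "h_part x = (\<lambda>a. x (Inl (Inr a)))"

definition g_part :: "(('a + 'a) + 'b \<Rightarrow> 'k) \<Rightarrow> 'b \<Rightarrow> 'k" where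
  "g_part x = (\<lambda>b. x (Inr b))"

lemma parts_dcoord [simp]: "hs_part (dcoord f s w) = f" "h_part (dcoord f s w) = s" "g_part (dcoord f s w) = w"
  by (simp_all add: hs_part_def h_part_def g_part_def fun_eq_iff)

lemma parts_add [simp]:
  "hs_part (x + y) = hs_part x + hs_part y" "h_part (x + y) = h_part x + h_part y"
  "g_part (x + y) = g_part x + g_part y"
  by (simp_all add: hs_part_def h_part_def g_part_def fun_eq_iff)

lemma to_triple_parts: "to_triple x = (hs_part x, g_part x, h_part x)"
  by (simp add: to_triple_def hs_part_def h_part_def g_part_def)

lemma lower_gram_d [simp]:
  fixes x :: "('a::finite + 'a) + 'b::finite \<Rightarrow> 'k::comm_ring_1"
  shows "lower (gram_d Bm) x (Inl (Inl a)) = x (Inl (Inr a))"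
    and "lower (gram_d Bm) x (Inl (Inr a)) = x (Inl (Inl a))"
    and "lower (gram_d Bm) x (Inr b) = lower Bm (g_part x) b"
  unfolding lower_def g_part_def by (subst sum_UNIV_dspace; simp add: if_distrib cong: if_cong)+

lemma nondegenerate_gram_d:
  fixes Bm :: "'b::finite \<Rightarrow> 'b \<Rightarrow> 'k::field"
  assumes "nondegenerate_form Bm"
  shows "nondegenerate_form (gram_d Bm :: ('a::finite + 'a) + 'b \<Rightarrow> _)"
  unfolding nondegenerate_form_iff_lower
proof (intro allI impI)
  fix x :: "('a + 'a) + 'b \<Rightarrow> 'k"
  assume "lower (gram_d Bm) x = 0"
  then have zero: "lower (gram_d Bm) x t = 0" for t
    by simp
  have h_hs: "x (Inl (Inr a)) = 0" "x (Inl (Inl a)) = 0" for a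
    using zero[of "Inl (Inl a)"] zero[of "Inl (Inr a)"] by simp_all
  have "lower Bm (g_part x) = 0"
    using zero[of "Inr _"] by (simp add: fun_eq_iff)
  then have "g_part x = 0"
    using assms unfolding nondegenerate_form_iff_lower by blast
  with h_hs show "x = 0"
    by (intro fun_eq_dspace) (simp_all add: g_part_def fun_eq_iff)
qed

lemma lin_map_zero: "lin_map D \<Longrightarrow> D 0 = 0"
  unfolding lin_map_def by (metis add_cancel_right_right add_0)

lemma lin_map_add: "lin_map D \<Longrightarrow> D (x + y) = D x + D y"
  unfolding lin_map_def by blast

lemma lin_map_diff: "lin_map D \<Longrightarrow> D (x - y) = D x - D y"
  unfolding lin_map_def by (metis add_diff_cancel diff_add_cancel eq_diff_eq)

lemma lin_map_uminus: "lin_map D \<Longrightarrow> D (- x) = - D x"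
  using lin_map_diff[of D 0 x] lin_map_zero[of D] by simp

lemmas lin_map_simps = lin_map_zero lin_map_add lin_map_diff lin_map_uminus

context
  fixes L :: "('n \<Rightarrow> 'k::field) \<Rightarrow> ('n \<Rightarrow> 'k) \<Rightarrow> ('n \<Rightarrow> 'k)"
  assumes lie: "lie_bracket L"
begin

lemma lie_bracket_lin_left: "lin_map (\<lambda>x. L x y)"
  using lie unfolding lie_bracket_def by blast

lemma lie_bracket_lin_right: "lin_map (\<lambda>y. L x y)"
  using lie unfolding lie_bracket_def by blast

lemma lie_bracket_simps:
  "L 0 c = 0" "L a 0 = 0" "L (a + b) c = L a c + L b c" "L a (b + c) = L a b + L a c"
  "L (a - b) c = L a c - L b c" "L a (b - c) = L a b - L a c" "L (- a) c = - L a c" "L a (- c) = - L a c"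
  using lin_map_simps[OF lie_bracket_lin_left] lin_map_simps[OF lie_bracket_lin_right] by auto

lemma lie_bracket_anticomm: "L a b = - L b a"
proof -
  have "L (a + b) (a + b) = 0" "L a a = 0" "L b b = 0"
    using lie unfolding lie_bracket_def by blast+
  then show ?thesis
    by (simp add: lie_bracket_simps eq_neg_iff_add_eq_0 add.commute)
qed

lemma lie_bracket_jacobi: "L a (L b c) + L b (L c a) + L c (L a b) = 0"
  using lie unfolding lie_bracket_def by blast

end

text \<open>The g-component of the Jacobiator of the semidirect product of h and g via \<theta>;
  its h-component is just the Jacobiator of h.\<close>
definition semidirect_jacobiator ::
  "(('b \<Rightarrow> 'k::field) \<Rightarrow> ('b \<Rightarrow> 'k) \<Rightarrow> ('b \<Rightarrow> 'k)) \<Rightarrow> (('a \<Rightarrow> 'k) \<Rightarrow> ('a \<Rightarrow> 'k) \<Rightarrow> ('a \<Rightarrow> 'k))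
    \<Rightarrow> (('a \<Rightarrow> 'k) \<Rightarrow> ('b \<Rightarrow> 'k) \<Rightarrow> ('b \<Rightarrow> 'k))
    \<Rightarrow> ('b \<Rightarrow> 'k) \<Rightarrow> ('b \<Rightarrow> 'k) \<Rightarrow> ('b \<Rightarrow> 'k) \<Rightarrow> ('a \<Rightarrow> 'k) \<Rightarrow> ('a \<Rightarrow> 'k) \<Rightarrow> ('a \<Rightarrow> 'k) \<Rightarrow> ('b \<Rightarrow> 'k)" where
  "semidirect_jacobiator Lg Lh \<theta> w1 w2 w3 s1 s2 s3 =
      Lg w1 (Lg w2 w3 + \<theta> s2 w3 - \<theta> s3 w2) + \<theta> s1 (Lg w2 w3 + \<theta> s2 w3 - \<theta> s3 w2) - \<theta> (Lh s2 s3) w1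
    + (Lg w2 (Lg w3 w1 + \<theta> s3 w1 - \<theta> s1 w3) + \<theta> s2 (Lg w3 w1 + \<theta> s3 w1 - \<theta> s1 w3) - \<theta> (Lh s3 s1) w2)
    + (Lg w3 (Lg w1 w2 + \<theta> s1 w2 - \<theta> s2 w1) + \<theta> s3 (Lg w1 w2 + \<theta> s1 w2 - \<theta> s2 w1) - \<theta> (Lh s1 s2) w3)"

lemma semidirect_jacobiator_eq_0_if_lie_hom_to_der:
  assumes g_lie: "lie_bracket Lg" and hom: "lie_hom_to_der Lh Lg \<theta>"
  shows "semidirect_jacobiator Lg Lh \<theta> w1 w2 w3 s1 s2 s3 = 0"
proof -
  have lin_s: "lin_map (\<lambda>s. \<theta> s w)" and lin_w: "lin_map (\<theta> s)"
    and der: "\<theta> s (Lg a b) = Lg (\<theta> s a) b + Lg a (\<theta> s b)"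
    and rep: "\<theta> (Lh s t) w = \<theta> s (\<theta> t w) - \<theta> t (\<theta> s w)" for s t w a b
    using hom unfolding lie_hom_to_der_def is_derivation_def by simp_all
  have anti: "Lg a (\<theta> s b) = - Lg (\<theta> s b) a" for a s b
    by (rule lie_bracket_anticomm[OF g_lie])
  have jac: "Lg w1 (Lg w2 w3) = - Lg w2 (Lg w3 w1) - Lg w3 (Lg w1 w2)"
    using lie_bracket_jacobi[OF g_lie, of w1 w2 w3] by (simp add: eq_neg_iff_add_eq_0 algebra_simps)
  show ?thesis
    unfolding semidirect_jacobiator_def
    by (simp add: lie_bracket_simps[OF g_lie] lin_map_simps[OF lin_s] lin_map_simps[OF lin_w]
        der rep anti jac algebra_simps)
qed

lemma lie_hom_to_der_if_semidirect_jacobiator_eq_0: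
  assumes g_lie: "lie_bracket Lg" and h_lie: "lie_bracket Lh"
    and lin_s: "\<And>w. lin_map (\<lambda>s. \<theta> s w)" and lin_w: "\<And>s. lin_map (\<theta> s)"
    and J: "\<And>w1 w2 w3 s1 s2 s3. semidirect_jacobiator Lg Lh \<theta> w1 w2 w3 s1 s2 s3 = 0"
  shows "lie_hom_to_der Lh Lg \<theta>"
  unfolding lie_hom_to_der_def is_derivation_def
proof (intro conjI allI lin_s lin_w)
  note simps = lie_bracket_simps[OF g_lie] lie_bracket_simps[OF h_lie] lin_map_simps[OF lin_s]
    lin_map_simps[OF lin_w]
  fix s x y
  have "\<theta> s (Lg x y) - Lg x (\<theta> s y) + Lg y (\<theta> s x) = 0"
    using J[of 0 x y s 0 0] unfolding semidirect_jacobiator_def by (simp add: simps algebra_simps)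
  then show "\<theta> s (Lg x y) = Lg (\<theta> s x) y + Lg x (\<theta> s y)"
    using lie_bracket_anticomm[OF g_lie, of y "\<theta> s x"] by (simp add: algebra_simps eq_neg_iff_add_eq_0)
next
  note simps = lie_bracket_simps[OF g_lie] lie_bracket_simps[OF h_lie] lin_map_simps[OF lin_s]
    lin_map_simps[OF lin_w]
  fix s t
  show "\<theta> (Lh s t) = (\<lambda>w. \<theta> s (\<theta> t w) - \<theta> t (\<theta> s w))"
    using J[of 0 0 _ s t 0] unfolding semidirect_jacobiator_def by (simp add: simps algebra_simps fun_eq_iff)
qed

definition summand :: "('a + 'a) + 'b \<Rightarrow> nat" where
  "summand i = (case i of Inl (Inl _) \<Rightarrow> 0 | Inl (Inr _) \<Rightarrow> 1 | Inr _ \<Rightarrow> 2)"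

lemma summand_simps [simp]: "summand (Inl (Inl a)) = 0" "summand (Inl (Inr a)) = 1" "summand (Inr b) = 2"
  by (simp_all add: summand_def)

lemma summand_eq_0_iff: "summand t = 0 \<longleftrightarrow> (\<exists>a. t = Inl (Inl a))"
  by (auto simp: summand_def split: sum.splits)

definition summand_count :: "nat \<Rightarrow> ('a + 'a) + 'b \<Rightarrow> ('a + 'a) + 'b \<Rightarrow> ('a + 'a) + 'b \<Rightarrow> nat" where
  "summand_count k x y z = of_bool (summand x = k) + of_bool (summand y = k) + of_bool (summand z = k)"

context
  fixes \<alpha> :: "(('a::finite + 'a) + 'b::finite, 'k::comm_ring_1) ext"
begin

lemma homogeneous_3_if_in_S3_g: "in_S3_g \<alpha> \<Longrightarrow> homogeneous 3 \<alpha>"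
  unfolding in_S3_g_def homogeneous_def by fastforce

lemma homogeneous_3_if_in_L2hs_h: "in_L2hs_h \<alpha> \<Longrightarrow> homogeneous 3 \<alpha>"
  unfolding in_L2hs_h_def homogeneous_def by fastforce

lemma homogeneous_3_if_in_hs_L2g: "in_hs_L2g \<alpha> \<Longrightarrow> homogeneous 3 \<alpha>"
  unfolding in_hs_L2g_def homogeneous_def by fastforce

lemma pot_coeff_eq_0_if_in_S3_g:
  assumes "in_S3_g \<alpha>" "\<not> (summand x = 2 \<and> summand y = 2 \<and> summand z = 2)"
  shows "pot_coeff \<alpha> x y z = 0"
proof (rule ccontr)
  assume "pot_coeff \<alpha> x y z \<noteq> 0"
  then have "\<alpha> {x, y, z} \<noteq> 0"
    using pot_coeff_nonzero by blast
  then obtain b1 b2 b3 where "{x, y, z} = {Inr b1, Inr b2, Inr b3}"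
    using assms(1) unfolding in_S3_g_def by blast
  then have "x \<in> range Inr" "y \<in> range Inr" "z \<in> range Inr"
    by (metis insertCI rangeI insertE singletonD)+
  then show False
    using assms(2) by auto
qed

lemma pot_coeff_eq_0_if_in_L2hs_h:
  assumes "in_L2hs_h \<alpha>" "\<not> (summand x \<noteq> 2 \<and> summand y \<noteq> 2 \<and> summand z \<noteq> 2 \<and> summand_count 1 x y z = 1)"
  shows "pot_coeff \<alpha> x y z = 0"
proof (rule ccontr)
  assume "pot_coeff \<alpha> x y z \<noteq> 0"
  then have "\<alpha> {x, y, z} \<noteq> 0" and distinct: "x \<noteq> y" "y \<noteq> z" "x \<noteq> z"
    using pot_coeff_nonzero by blast+
  then obtain a1 a2 a3 where S: "{x, y, z} = {Inl (Inl a1), Inl (Inl a2), Inl (Inr a3)}"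
    using assms(1) unfolding in_L2hs_h_def by blast
  then have "x \<in> {Inl (Inl a1), Inl (Inl a2), Inl (Inr a3)}" "y \<in> {Inl (Inl a1), Inl (Inl a2), Inl (Inr a3)}"
      "z \<in> {Inl (Inl a1), Inl (Inl a2), Inl (Inr a3)}" "Inl (Inr a3) \<in> {x, y, z}"
    by (metis insertCI)+
  then show False
    using distinct assms(2) by (auto simp: summand_count_def)
qed

lemma pot_coeff_eq_0_if_in_hs_L2g:
  assumes "in_hs_L2g \<alpha>" "\<not> (summand x \<noteq> 1 \<and> summand y \<noteq> 1 \<and> summand z \<noteq> 1 \<and> summand_count 0 x y z = 1)"
  shows "pot_coeff \<alpha> x y z = 0"
proof (rule ccontr)
  assume "pot_coeff \<alpha> x y z \<noteq> 0"
  then have "\<alpha> {x, y, z} \<noteq> 0" and distinct: "x \<noteq> y" "y \<noteq> z" "x \<noteq> z"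
    using pot_coeff_nonzero by blast+
  then obtain a b1 b2 where S: "{x, y, z} = {Inl (Inl a), Inr b1, Inr b2}"
    using assms(1) unfolding in_hs_L2g_def by blast
  then have "x \<in> {Inl (Inl a), Inr b1, Inr b2}" "y \<in> {Inl (Inl a), Inr b1, Inr b2}"
      "z \<in> {Inl (Inl a), Inr b1, Inr b2}" "Inl (Inl a) \<in> {x, y, z}"
    by (metis insertCI)+
  then show False
    using distinct assms(2) by (auto simp: summand_count_def)
qed

end

section \<open>Potentials of double extensions\<close>

locale mr_potentials =
  fixes Bm :: "'b::finite \<Rightarrow> 'b \<Rightarrow> 'k::field_char_0"
    and Lg :: "('b \<Rightarrow> 'k) \<Rightarrow> ('b \<Rightarrow> 'k) \<Rightarrow> ('b \<Rightarrow> 'k)"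
    and Lh :: "('a::finite \<Rightarrow> 'k) \<Rightarrow> ('a \<Rightarrow> 'k) \<Rightarrow> ('a \<Rightarrow> 'k)"
    and \<mu> \<nu> \<psi> :: "(('a + 'a) + 'b, 'k) ext"
  assumes g_lie: "lie_bracket Lg"
    and B_sym: "symmetric_form Bm"
    and B_nondeg: "nondegenerate_form Bm"
    and mu_S3g: "in_S3_g \<mu>"
    and mu_pot: "\<forall>a b. gvec (Lg a b) = poisson (gram_d Bm) (gvec a) (poisson (gram_d Bm) (gvec b) \<mu>)"
    and h_lie: "lie_bracket Lh"
    and nu_space: "in_L2hs_h \<nu>"
    and nu_bracket: "\<forall>x y. hvec (Lh x y) = poisson (gram_d Bm) (hvec x) (poisson (gram_d Bm) (hvec y) \<nu>)"
    and psi_space: "in_hs_L2g \<psi>"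
begin

abbreviation "G \<equiv> gram_d Bm"
abbreviation "P \<equiv> \<mu> + \<nu> + \<psi>"
abbreviation "\<theta> \<equiv> theta_psi Bm \<psi>"

lemma homogeneous_P: "homogeneous 3 P"
  using homogeneous_3_if_in_S3_g[OF mu_S3g] homogeneous_3_if_in_L2hs_h[OF nu_space]
    homogeneous_3_if_in_hs_L2g[OF psi_space]
  by (intro homogeneous_add)

lemma pot_coeff_P: "pot_coeff P x y z = pot_coeff \<mu> x y z + pot_coeff \<nu> x y z + pot_coeff \<psi> x y z"
  by (simp add: pot_coeff_add)

lemmas pot_coeff_summands_eq_0 = pot_coeff_eq_0_if_in_S3_g[OF mu_S3g]
  pot_coeff_eq_0_if_in_L2hs_h[OF nu_space] pot_coeff_eq_0_if_in_hs_L2g[OF psi_space]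

lemma Lh_eq_pot_coeff:
  "Lh s t a = (\<Sum>c\<in>UNIV. \<Sum>d\<in>UNIV. s c * t d * pot_coeff P (Inl (Inr a)) (Inl (Inl c)) (Inl (Inl d)))"
proof -
  have "vext (dcoord 0 (Lh s t) 0) = vext (pot_bracket G \<nu> (dcoord 0 s 0) (dcoord 0 t 0))"
    using nu_bracket poisson_vext_vext_potential[OF homogeneous_3_if_in_L2hs_h[OF nu_space]] by simp
  then have "Lh s t a = pot_bracket G \<nu> (dcoord 0 s 0) (dcoord 0 t 0) (Inl (Inr a))"
    by (metis dcoord_simps(2) vext_inj)
  then show ?thesis
    unfolding pot_bracket_def
    by (simp add: sum_UNIV_dspace pot_coeff_P pot_coeff_summands_eq_0 summand_count_def)
qed

lemma Lg_eq_pot_coeff: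
  "Lg u v c = (\<Sum>j\<in>UNIV. \<Sum>l\<in>UNIV. lower Bm u j * lower Bm v l * pot_coeff P (Inr c) (Inr j) (Inr l))"
proof -
  have "vext (dcoord 0 0 (Lg u v)) = vext (pot_bracket G \<mu> (dcoord 0 0 u) (dcoord 0 0 v))"
    using mu_pot poisson_vext_vext_potential[OF homogeneous_3_if_in_S3_g[OF mu_S3g]] by simp
  then have "Lg u v c = pot_bracket G \<mu> (dcoord 0 0 u) (dcoord 0 0 v) (Inr c)"
    by (metis dcoord_simps(3) vext_inj)
  then show ?thesis
    unfolding pot_bracket_def
    by (simp add: sum_UNIV_dspace pot_coeff_P pot_coeff_summands_eq_0 summand_count_def)
qed

lemma theta_eq_pot_coeff:
  "\<theta> s w c = (\<Sum>j\<in>UNIV. \<Sum>b\<in>UNIV. s j * lower Bm w b * pot_coeff P (Inr c) (Inl (Inl j)) (Inr b))"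
proof -
  let ?X = "poisson G (hvec s) \<psi>"
  have X: "?X = (\<Sum>j\<in>UNIV. ext_scale (lower G (dcoord 0 s 0) j) (left_der j \<psi>))"
    by (rule poisson_vext_left)
  have X_hom: "homogeneous 2 ?X"
    unfolding X using homogeneous_left_der[OF homogeneous_3_if_in_hs_L2g[OF psi_space]]
    by (intro homogeneous_sum homogeneous_scale) simp
  have "\<theta> s w c = (\<Sum>i\<in>UNIV. - lower G (dcoord 0 0 w) i
      * (\<Sum>j\<in>UNIV. lower G (dcoord 0 s 0) j * pot_coeff \<psi> (Inr c) i j))"
    unfolding theta_psi_def gpart_def poisson_vext_right[OF X_hom symmetric_gram_d[OF B_sym]] sum_fun_apply
      ext_scale_apply
    unfolding left_der_empty[symmetric] X left_der_sum left_der_scale sum_fun_apply ext_scale_apply pot_coeff_def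
    by simp
  also have "\<dots> = (\<Sum>j\<in>UNIV. \<Sum>b\<in>UNIV. - (lower Bm w b * (s j * pot_coeff \<psi> (Inr c) (Inr b) (Inl (Inl j)))))"
    by (subst sum.swap) (simp add: sum_UNIV_dspace sum_distrib_left)
  also have "\<dots> = (\<Sum>j\<in>UNIV. \<Sum>b\<in>UNIV. s j * lower Bm w b * pot_coeff \<psi> (Inr c) (Inl (Inl j)) (Inr b))"
    by (subst (2) pot_coeff_swap23) (simp add: mult_ac)
  finally show ?thesis
    by (simp add: pot_coeff_P pot_coeff_summands_eq_0 summand_count_def)
qed

lemma coad_eq_pot_coeff:
  "coad Lh s f a = (\<Sum>c\<in>UNIV. \<Sum>j\<in>UNIV. f c * s j * pot_coeff P (Inl (Inr c)) (Inl (Inl j)) (Inl (Inl a)))"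
proof -
  have "coad Lh s f a = (\<Sum>c\<in>UNIV. f c * Lh s (basis_vec a) c)"
    unfolding coad_def dpair_def ..
  also have "\<dots> = (\<Sum>c\<in>UNIV. f c * (\<Sum>j\<in>UNIV. s j * pot_coeff P (Inl (Inr c)) (Inl (Inl j)) (Inl (Inl a))))"
    unfolding Lh_eq_pot_coeff by (simp add: basis_vec_def if_distrib if_distribR sum.delta' cong: if_cong)
  finally show ?thesis
    by (simp add: sum_distrib_left mult_ac)
qed

lemma mr_omega_eq_pot_coeff:
  "mr_omega Bm \<theta> w1 w2 a
    = (\<Sum>i\<in>UNIV. \<Sum>b\<in>UNIV. lower Bm w1 b * lower Bm w2 i * pot_coeff P (Inr i) (Inl (Inl a)) (Inr b))"
proof -
  have theta_basis: "\<theta> (basis_vec a) w1 i = (\<Sum>b\<in>UNIV. lower Bm w1 b * pot_coeff P (Inr i) (Inl (Inl a)) (Inr b))"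
    for i
  proof -
    have "\<theta> (basis_vec a) w1 i = (\<Sum>j\<in>UNIV. if j = a
        then (\<Sum>b\<in>UNIV. lower Bm w1 b * pot_coeff P (Inr i) (Inl (Inl j)) (Inr b)) else 0)"
      unfolding theta_eq_pot_coeff by (rule sum.cong) (simp_all add: basis_vec_def)
    then show ?thesis
      by simp
  qed
  have "mr_omega Bm \<theta> w1 w2 a = (\<Sum>i\<in>UNIV. \<theta> (basis_vec a) w1 i * lower Bm w2 i)"
    unfolding mr_omega_def bform_def lower_def using B_sym unfolding symmetric_form_def
    by (simp add: sum_distrib_left mult_ac)
  then show ?thesis
    unfolding theta_basis by (simp add: sum_distrib_right sum_distrib_left mult_ac)
qed

lemma pot_bracket_h_part: "pot_bracket G P x y (Inl (Inr a)) = Lh (h_part x) (h_part y) a"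
  unfolding pot_bracket_def Lh_eq_pot_coeff h_part_def
  by (simp add: sum_UNIV_dspace pot_coeff_P pot_coeff_summands_eq_0 summand_count_def)

lemma pot_bracket_g_part:
  "pot_bracket G P x y (Inr c) = Lg (g_part x) (g_part y) c + \<theta> (h_part x) (g_part y) c - \<theta> (h_part y) (g_part x) c"
proof -
  have expand: "pot_bracket G P x y (Inr c) =
      (\<Sum>j\<in>UNIV. \<Sum>l\<in>UNIV. lower Bm (g_part x) j * lower Bm (g_part y) l * pot_coeff P (Inr c) (Inr j) (Inr l))
    + (\<Sum>j\<in>UNIV. \<Sum>b\<in>UNIV. h_part x j * lower Bm (g_part y) b * pot_coeff P (Inr c) (Inl (Inl j)) (Inr b))
    + (\<Sum>b\<in>UNIV. \<Sum>j\<in>UNIV. lower Bm (g_part x) b * h_part y j * pot_coeff P (Inr c) (Inr b) (Inl (Inl j)))"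
    unfolding pot_bracket_def pot_coeff_P h_part_def
    by (simp add: sum_UNIV_dspace pot_coeff_summands_eq_0 summand_count_def sum.distrib add_ac)
  have "(\<Sum>b\<in>UNIV. \<Sum>j\<in>UNIV. lower Bm (g_part x) b * h_part y j * pot_coeff P (Inr c) (Inr b) (Inl (Inl j)))
      = - \<theta> (h_part y) (g_part x) c"
    unfolding theta_eq_pot_coeff
    by (subst sum.swap) (simp add: pot_coeff_swap23[of P "Inr c" "Inr _"] sum_negf mult_ac)
  then show ?thesis
    unfolding expand Lg_eq_pot_coeff theta_eq_pot_coeff[of "h_part x"] by simp
qed

lemma pot_bracket_hs_part:
  "pot_bracket G P x y (Inl (Inl a)) = coad Lh (h_part y) (hs_part x) a - coad Lh (h_part x) (hs_part y) a
    + mr_omega Bm \<theta> (g_part x) (g_part y) a"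
proof -
  have expand: "pot_bracket G P x y (Inl (Inl a)) =
      (\<Sum>c\<in>UNIV. \<Sum>d\<in>UNIV. h_part x c * hs_part y d * pot_coeff P (Inl (Inl a)) (Inl (Inl c)) (Inl (Inr d)))
    + (\<Sum>c\<in>UNIV. \<Sum>d\<in>UNIV. hs_part x c * h_part y d * pot_coeff P (Inl (Inl a)) (Inl (Inr c)) (Inl (Inl d)))
    + (\<Sum>b\<in>UNIV. \<Sum>b'\<in>UNIV. lower Bm (g_part x) b * lower Bm (g_part y) b' * pot_coeff P (Inl (Inl a)) (Inr b) (Inr b'))"
    unfolding pot_bracket_def pot_coeff_P h_part_def hs_part_def
    by (simp add: sum_UNIV_dspace pot_coeff_summands_eq_0 summand_count_def sum.distrib add_ac)
  have "pot_coeff P (Inl (Inl a)) (Inl (Inl c)) (Inl (Inr d)) = - pot_coeff P (Inl (Inr d)) (Inl (Inl c)) (Inl (Inl a))"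
    for c d
    using pot_coeff_cycle[of P "Inl (Inr d)" "Inl (Inl a)" "Inl (Inl c)"]
      pot_coeff_swap23[of P "Inl (Inr d)" "Inl (Inl a)" "Inl (Inl c)"]
    by simp
  then have first: "(\<Sum>c\<in>UNIV. \<Sum>d\<in>UNIV. h_part x c * hs_part y d * pot_coeff P (Inl (Inl a)) (Inl (Inl c)) (Inl (Inr d)))
      = - coad Lh (h_part x) (hs_part y) a"
    unfolding coad_eq_pot_coeff by (subst sum.swap) (simp add: sum_negf mult_ac)
  have second: "(\<Sum>c\<in>UNIV. \<Sum>d\<in>UNIV. hs_part x c * h_part y d * pot_coeff P (Inl (Inl a)) (Inl (Inr c)) (Inl (Inl d)))
      = coad Lh (h_part y) (hs_part x) a"
    unfolding coad_eq_pot_coeff using pot_coeff_cycle[of P "Inl (Inl a)"] by simp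
  have third: "(\<Sum>b\<in>UNIV. \<Sum>b'\<in>UNIV. lower Bm (g_part x) b * lower Bm (g_part y) b' * pot_coeff P (Inl (Inl a)) (Inr b) (Inr b'))
      = mr_omega Bm \<theta> (g_part x) (g_part y) a"
    unfolding mr_omega_eq_pot_coeff using pot_coeff_cycle[of P "Inr _" "Inl (Inl a)"]
    by (subst sum.swap) simp
  show ?thesis
    unfolding expand first second third by simp
qed

theorem double_extension_eq_pot_bracket: "double_extension Bm Lg Lh \<theta> = pot_bracket G P"
proof (rule ext, rule ext, rule fun_eq_dspace)
  fix x y a b
  show "double_extension Bm Lg Lh \<theta> x y (Inl (Inl a)) = pot_bracket G P x y (Inl (Inl a))"
    "double_extension Bm Lg Lh \<theta> x y (Inl (Inr a)) = pot_bracket G P x y (Inl (Inr a))"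
    "double_extension Bm Lg Lh \<theta> x y (Inr b) = pot_bracket G P x y (Inr b)"
    unfolding pot_bracket_hs_part pot_bracket_h_part pot_bracket_g_part
    by (simp_all add: double_extension_def of_triple_def mr_bracket_def to_triple_parts)
qed

lemma theta_lin_left: "lin_map (\<lambda>s. \<theta> s w)"
  unfolding lin_map_def
  by (simp add: fun_eq_iff theta_eq_pot_coeff smul_def algebra_simps sum.distrib sum_distrib_left)

lemma theta_lin_right: "lin_map (\<theta> s)"
  unfolding lin_map_def
  by (simp add: fun_eq_iff theta_eq_pot_coeff lower_add lower_scale smul_def algebra_simps sum.distrib
      sum_distrib_left)

lemma theta_preserves_form: "preserves_form Bm (\<theta> s)"
  unfolding preserves_form_def
proof (intro allI)
  fix x y
  define T where "T c b = (\<Sum>j\<in>UNIV. s j * pot_coeff P (Inr c) (Inl (Inl j)) (Inr b))" for c b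
  have T_anti: "T c b = - T b c" for c b
  proof -
    have "pot_coeff P (Inr c) (Inl (Inl j)) (Inr b) = - pot_coeff P (Inr b) (Inl (Inl j)) (Inr c)" for j
      using pot_coeff_cycle[of P "Inr c" "Inl (Inl j)" "Inr b"] pot_coeff_swap12[of P "Inl (Inl j)" "Inr b" "Inr c"]
      by simp
    then show ?thesis
      unfolding T_def by (simp add: sum_negf)
  qed
  have theta_T: "\<theta> s w c = (\<Sum>b\<in>UNIV. lower Bm w b * T c b)" for w c
    unfolding theta_eq_pot_coeff T_def by (subst sum.swap) (simp add: sum_distrib_left mult_ac)
  have "bform Bm (\<theta> s x) y = (\<Sum>c\<in>UNIV. \<Sum>b\<in>UNIV. lower Bm x b * lower Bm y c * T c b)"
    unfolding bform_eq_sum_lower_right[OF B_sym] theta_T by (simp add: sum_distrib_right sum_distrib_left mult_ac)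
  moreover have "bform Bm x (\<theta> s y) = (\<Sum>c\<in>UNIV. \<Sum>b\<in>UNIV. lower Bm x c * lower Bm y b * T c b)"
    unfolding bform_eq_sum_lower theta_T by (simp add: sum_distrib_left mult_ac)
  moreover have "\<dots> = (\<Sum>b\<in>UNIV. \<Sum>c\<in>UNIV. lower Bm x c * lower Bm y b * T c b)"
    by (rule sum.swap)
  moreover have "\<dots> = - (\<Sum>c\<in>UNIV. \<Sum>b\<in>UNIV. lower Bm x b * lower Bm y c * T c b)"
    by (subst T_anti) (simp add: sum_negf)
  ultimately show "bform Bm (\<theta> s x) y + bform Bm x (\<theta> s y) = 0"
    by simp
qed

lemma derived_potential_double_extension: "derived_potential G (double_extension Bm Lg Lh \<theta>) P"
  unfolding derived_potential_def double_extension_eq_pot_bracket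
  using homogeneous_P poisson_vext_vext_potential[OF homogeneous_P] by simp

lemma parts_jacobiator:
  "g_part (jacobiator (pot_bracket G P) x y z)
    = semidirect_jacobiator Lg Lh \<theta> (g_part x) (g_part y) (g_part z) (h_part x) (h_part y) (h_part z)"
  "h_part (jacobiator (pot_bracket G P) x y z) = jacobiator Lh (h_part x) (h_part y) (h_part z)"
proof -
  have "g_part (pot_bracket G P u v) = Lg (g_part u) (g_part v) + \<theta> (h_part u) (g_part v) - \<theta> (h_part v) (g_part u)"
    "h_part (pot_bracket G P u v) = Lh (h_part u) (h_part v)" for u v
    by (simp_all add: fun_eq_iff pot_bracket_g_part pot_bracket_h_part g_part_def h_part_def[of "pot_bracket _ _ _ _"])
  then show "g_part (jacobiator (pot_bracket G P) x y z)
      = semidirect_jacobiator Lg Lh \<theta> (g_part x) (g_part y) (g_part z) (h_part x) (h_part y) (h_part z)"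
    "h_part (jacobiator (pot_bracket G P) x y z) = jacobiator Lh (h_part x) (h_part y) (h_part z)"
    unfolding jacobiator_def semidirect_jacobiator_def by simp_all
qed

lemma lie_hom_to_der_if_jacobi:
  assumes "jacobi_identity (pot_bracket G P)"
  shows "lie_hom_to_der Lh Lg \<theta>"
proof (rule lie_hom_to_der_if_semidirect_jacobiator_eq_0[where \<theta> = \<theta>, OF g_lie h_lie theta_lin_left theta_lin_right])
  fix w1 w2 w3 s1 s2 s3
  have "semidirect_jacobiator Lg Lh \<theta> w1 w2 w3 s1 s2 s3
      = g_part (jacobiator (pot_bracket G P) (dcoord 0 s1 w1) (dcoord 0 s2 w2) (dcoord 0 s3 w3))"
    unfolding parts_jacobiator by simp
  also have "\<dots> = 0"
    using assms unfolding jacobi_identity_def by (simp add: g_part_def fun_eq_iff)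
  finally show "semidirect_jacobiator Lg Lh \<theta> w1 w2 w3 s1 s2 s3 = 0" .
qed

lemma jacobi_coeff_eq_0_if_lie_hom_to_der_outside_hs:
  assumes hom: "lie_hom_to_der Lh Lg \<theta>" and m: "summand m \<noteq> 0"
  shows "jacobi_coeff G P m j r s = 0"
proof -
  obtain x y z where coeff: "\<And>m. jacobi_coeff G P m j r s = jacobiator (pot_bracket G P) x y z m"
    using jacobi_coeff_eq_jacobiator[OF nondegenerate_gram_d[OF B_nondeg], where P = P and j = j and r = r and s = s]
    by blast
  have g0: "g_part (jacobiator (pot_bracket G P) x y z) = 0"
    unfolding parts_jacobiator(1) using semidirect_jacobiator_eq_0_if_lie_hom_to_der[OF g_lie hom]
    by (simp add: fun_eq_iff)
  have h0: "h_part (jacobiator (pot_bracket G P) x y z) = 0"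
    unfolding parts_jacobiator(2) unfolding jacobiator_def using lie_bracket_jacobi[OF h_lie] by simp
  have "(\<exists>c. m = Inr c) \<or> (\<exists>a. m = Inl (Inr a))"
    using m by (cases m) (auto simp: summand_def split: sum.splits)
  then show ?thesis
    using fun_cong[OF g0] fun_cong[OF h0] unfolding coeff g_part_def h_part_def by auto
qed

lemma jacobi_coeff_hs_eq_0: "jacobi_coeff G P (Inl (Inl a)) (Inl (Inl b)) (Inl (Inl c)) (Inl (Inl d)) = 0"
  unfolding jacobi_coeff_def pot_pairing_def pot_coeff_P
  by (simp add: sum_UNIV_dspace pot_coeff_summands_eq_0 summand_count_def)

text \<open>The coefficients with an index outside h* are reduced by total antisymmetry to those with
  first index outside h*.\<close>
lemma jacobi_coeff_eq_0_if_lie_hom_to_der: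
  assumes hom: "lie_hom_to_der Lh Lg \<theta>"
  shows "jacobi_coeff G P m j r s = 0"
proof -
  note front = jacobi_coeff_eq_0_if_lie_hom_to_der_outside_hs[OF hom]
  note alt = jacobi_coeff_alternating[OF homogeneous_P symmetric_gram_d[OF B_sym]]
  consider "summand m \<noteq> 0" | "summand j \<noteq> 0" | "summand r \<noteq> 0" | "summand s \<noteq> 0"
    | "summand m = 0" "summand j = 0" "summand r = 0" "summand s = 0"
    by blast
  then show ?thesis
  proof cases
    case 1
    then show ?thesis by (rule front)
  next
    case 2
    then show ?thesis using alt(1)[of m j r s] front[of j m r s] by simp
  next
    case 3
    then show ?thesis using alt(2)[of m j r s] alt(1)[of m r j s] front[of r m j s] by simp
  next
    case 4
    then show ?thesis using alt(3)[of m j r s] alt(2)[of m j s r] alt(1)[of m s j r] front[of s m j r] by simp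
  next
    case 5
    then show ?thesis
      using jacobi_coeff_hs_eq_0 by (auto simp: summand_eq_0_iff)
  qed
qed

theorem double_extension_potential:
  "(lie_hom_to_der Lh Lg \<theta> \<and> (\<forall>s. preserves_form Bm (\<theta> s))
       \<longrightarrow> derived_potential G (double_extension Bm Lg Lh \<theta>) P \<and> poisson G P P = 0)
   \<and> (poisson G P P = 0
       \<longrightarrow> lie_hom_to_der Lh Lg \<theta> \<and> (\<forall>s. preserves_form Bm (\<theta> s))
           \<and> derived_potential G (double_extension Bm Lg Lh \<theta>) P)"
proof -
  note poisson_iff = poisson_self_eq_0_iff[OF homogeneous_P symmetric_gram_d[OF B_sym]]
  have "poisson G P P = 0" if "lie_hom_to_der Lh Lg \<theta>"
    using poisson_iff jacobi_coeff_eq_0_if_lie_hom_to_der[OF that] by blast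
  moreover have "lie_hom_to_der Lh Lg \<theta>" if "poisson G P P = 0"
    using that poisson_iff jacobi_identity_pot_bracket_iff[OF nondegenerate_gram_d[OF B_nondeg]]
      lie_hom_to_der_if_jacobi by blast
  ultimately show ?thesis
    using derived_potential_double_extension theta_preserves_form by blast
qed

end

theorem mainTheorem5:
  fixes Bm :: "'b::finite \<Rightarrow> 'b \<Rightarrow> 'k::field_char_0"
    and Lg :: "('b \<Rightarrow> 'k) \<Rightarrow> ('b \<Rightarrow> 'k) \<Rightarrow> ('b \<Rightarrow> 'k)"
    and Lh :: "('a::finite \<Rightarrow> 'k) \<Rightarrow> ('a \<Rightarrow> 'k) \<Rightarrow> ('a \<Rightarrow> 'k)"
    and \<mu> \<nu> \<psi> :: "(('a + 'a) + 'b, 'k) ext"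
  assumes g_lie: "lie_bracket Lg"
    and B_sym: "symmetric_form Bm"
    and B_nondeg: "nondegenerate_form Bm"
    and B_inv: "invariant_form Bm Lg"
    and mu_S3g: "in_S3_g \<mu>"
    and mu_pot: "\<forall>a b. gvec (Lg a b) = poisson (gram_d Bm) (gvec a) (poisson (gram_d Bm) (gvec b) \<mu>)"
    and h_lie: "lie_bracket Lh"
    and nu_space: "in_L2hs_h \<nu>"
    and nu_bracket: "\<forall>x y. hvec (Lh x y) = poisson (gram_d Bm) (hvec x) (poisson (gram_d Bm) (hvec y) \<nu>)"
    and psi_space: "in_hs_L2g \<psi>"
  shows
    "(lie_hom_to_der Lh Lg (theta_psi Bm \<psi>) \<and> (\<forall>s. preserves_form Bm (theta_psi Bm \<psi> s))
       \<longrightarrow> derived_potential (gram_d Bm) (double_extension Bm Lg Lh (theta_psi Bm \<psi>)) (\<mu> + \<nu> + \<psi>)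
           \<and> poisson (gram_d Bm) (\<mu> + \<nu> + \<psi>) (\<mu> + \<nu> + \<psi>) = 0)
     \<and>
     (poisson (gram_d Bm) (\<mu> + \<nu> + \<psi>) (\<mu> + \<nu> + \<psi>) = 0
       \<longrightarrow> lie_hom_to_der Lh Lg (theta_psi Bm \<psi>) \<and> (\<forall>s. preserves_form Bm (theta_psi Bm \<psi> s))
           \<and> derived_potential (gram_d Bm) (double_extension Bm Lg Lh (theta_psi Bm \<psi>)) (\<mu> + \<nu> + \<psi>))"
proof -
  interpret mr_potentials Bm Lg Lh \<mu> \<nu> \<psi>
    using g_lie B_sym B_nondeg mu_S3g mu_pot h_lie nu_space nu_bracket psi_space by unfold_locales
  show ?thesis
    by (rule double_extension_potential)
qed

end
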